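(* Let $q=2^n$ with $n$ odd. Then every centric cube of $\hat{\mathcal X}$ with center $n_0$ is contained in exactly two centric decades of $\hat{\mathcal X}$ with center $n_0$ and in exactly one centric dodecade of $\hat{\mathcal X}$ with center $n_0$. Every centric decade of $\hat{\mathcal X}$ with center $n_0$ is contained in exactly one centric dodecade of $\hat{\mathcal X}$ with center $n_0$.
   Context: Let $q=2^n$, $V=V(6,q)$, and let $Q=Q^-(5,q)$ be the set of singular points of a non-degenerate quadratic form $f$ of Witt index $2$ on $V$, a generalized quadrangle of order $(q,q^2)$ whose lines are the totally singular lines; $\perp$ is the polarity defined by the bilinear form of $f$. Let $H_0$ be a hyperplane with $Q_0:=Q\cap H_0\cong Q(4,q)$ parabolic, and $n_0:=H_0^\perp$. $\hat{\mathcal X}$ is the geometry with points $Q\setminus Q_0$ and lines $l\setminus\{l\cap Q_0\}$ for lines $l$ of $Q$ not in $Q_0$; $\hat\Gamma$ is its collinearity graph. For $k\ge3$, a centric $2k$-configuration of $\hat{\mathcal X}$ with center $n_0$ is a set of $2k$ points $\{x_i^a: i=1,\dots,k,\ a=1,2\}$ of $Q\setminus Q_0$ such that $x_i^a,x_j^b$ are adjacent in $\hat\Gamma$ iff $i\ne j$ and $a\ne b$, and each projective line through $x_i^1,x_i^2$ passes through $n_0$; it is called a centric cube, decade, dodecade for $k=4,5,6$ respectively. Containment means inclusion of point sets. *)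

theory Defs
  imports "HOL-Analysis.Finite_Cartesian_Product"
begin

text \<open>Vectors of V(6,q) are elements of type 'a^6 over a finite field 'a.
  Projective points are represented as the 1-dimensional subspaces themselves.\<close>

type_synonym 'a vec6 = "'a ^ 6"

definition quadratic_form :: "('a::field ^ 6 \<Rightarrow> 'a) \<Rightarrow> bool" where
  "quadratic_form f \<longleftrightarrow>
     (\<exists>A :: 6 \<Rightarrow> 6 \<Rightarrow> 'a. \<forall>v. f v = (\<Sum>i\<in>UNIV. \<Sum>j\<in>UNIV. A i j * v$i * v$j))"

definition polar :: "('a::field ^ 6 \<Rightarrow> 'a) \<Rightarrow> 'a ^ 6 \<Rightarrow> 'a ^ 6 \<Rightarrow> 'a" where
  "polar f x y = f (x + y) - f x - f y"

definition nondeg_on :: "('a::field ^ 6) set \<Rightarrow> ('a ^ 6 \<Rightarrow> 'a) \<Rightarrow> bool" where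
  "nondeg_on W f \<longleftrightarrow>
     (\<forall>v\<in>W. v \<noteq> 0 \<and> f v = 0 \<longrightarrow> \<not> (\<forall>w\<in>W. polar f v w = 0))"

definition ts_subspace_dim :: "('a::field ^ 6 \<Rightarrow> 'a) \<Rightarrow> nat \<Rightarrow> bool" where
  "ts_subspace_dim f d \<longleftrightarrow>
     (\<exists>u :: nat \<Rightarrow> 'a ^ 6.
        (\<forall>c. (\<Sum>i<d. c i *s u i) = 0 \<longrightarrow> (\<forall>i<d. c i = 0)) \<and>
        (\<forall>c. f (\<Sum>i<d. c i *s u i) = 0))"

definition witt_index :: "('a::field ^ 6 \<Rightarrow> 'a) \<Rightarrow> nat \<Rightarrow> bool" where
  "witt_index f d \<longleftrightarrow> ts_subspace_dim f d \<and> \<not> ts_subspace_dim f (Suc d)"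

definition is_hyperplane :: "('a::field ^ 6) set \<Rightarrow> bool" where
  "is_hyperplane H \<longleftrightarrow> (\<exists>h :: 'a ^ 6. h \<noteq> 0 \<and> H = {v. (\<Sum>i\<in>UNIV. h$i * v$i) = 0})"

definition perp :: "('a::field ^ 6 \<Rightarrow> 'a) \<Rightarrow> ('a ^ 6) set \<Rightarrow> ('a ^ 6) set" where
  "perp f W = {x. \<forall>w\<in>W. polar f x w = 0}"

definition pt :: "'a::field ^ 6 \<Rightarrow> ('a ^ 6) set" where
  "pt v = range (\<lambda>c. c *s v)"

definition proj_points :: "('a::field ^ 6) set set" where
  "proj_points = {pt v | v. v \<noteq> 0}"

definition join :: "('a::field ^ 6) set \<Rightarrow> ('a ^ 6) set \<Rightarrow> ('a ^ 6) set" where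
  "join P R = {p + r | p r. p \<in> P \<and> r \<in> R}"

definition sing_points :: "('a::field ^ 6 \<Rightarrow> 'a) \<Rightarrow> ('a ^ 6) set set" where
  "sing_points f = {pt v | v. v \<noteq> 0 \<and> f v = 0}"

definition ts_lines :: "('a::field ^ 6 \<Rightarrow> 'a) \<Rightarrow> ('a ^ 6) set set" where
  "ts_lines f = {join P R | P R. P \<in> proj_points \<and> R \<in> proj_points \<and> P \<noteq> R \<and>
                                (\<forall>w\<in>join P R. f w = 0)}"

definition Xhat_points :: "('a::field ^ 6 \<Rightarrow> 'a) \<Rightarrow> ('a ^ 6) set \<Rightarrow> ('a ^ 6) set set" where
  "Xhat_points f H0 = {P \<in> sing_points f. \<not> P \<subseteq> H0}"

definition Xhat_adj :: "('a::field ^ 6 \<Rightarrow> 'a) \<Rightarrow> ('a ^ 6) set \<Rightarrow> ('a ^ 6) set \<Rightarrow> ('a ^ 6) set \<Rightarrow> bool" where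
  "Xhat_adj f H0 P R \<longleftrightarrow>
     P \<in> Xhat_points f H0 \<and> R \<in> Xhat_points f H0 \<and> P \<noteq> R \<and>
     (\<exists>L\<in>ts_lines f. \<not> L \<subseteq> H0 \<and> P \<subseteq> L \<and> R \<subseteq> L)"

text \<open>Centric 2k-configuration of hat X with center n0 = H0^perp, as a set of points.\<close>
definition centric_config ::
  "('a::field ^ 6 \<Rightarrow> 'a) \<Rightarrow> ('a ^ 6) set \<Rightarrow> nat \<Rightarrow> ('a ^ 6) set set \<Rightarrow> bool" where
  "centric_config f H0 k S \<longleftrightarrow>
     (\<exists>x :: nat \<Rightarrow> nat \<Rightarrow> ('a ^ 6) set.
        S = {x i a | i a. i \<in> {1..k} \<and> a \<in> {1,2}} \<and>
        card S = 2 * k \<and>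
        S \<subseteq> Xhat_points f H0 \<and>
        (\<forall>i\<in>{1..k}. \<forall>j\<in>{1..k}. \<forall>a\<in>{1,2}. \<forall>b\<in>{1,2}.
            Xhat_adj f H0 (x i a) (x j b) \<longleftrightarrow> i \<noteq> j \<and> a \<noteq> b) \<and>
        (\<forall>i\<in>{1..k}. perp f H0 \<subseteq> join (x i 1) (x i 2)))"

end

theory Submission
  imports Defs
begin

(* Structure of the development.
   1. Finite fields of characteristic two: q = 2^n forces 1 + 1 = 0, every element is a
      square, the Artin-Schreier map a |-> a^2 + a has image of index two, and for n odd the
      value 1 is not attained (3 does not divide 2^n - 1).
   2. The polar form B of f is a symmetric alternating bilinear form; two points of hat-X are
      adjacent iff their representatives are B-orthogonal.
   3. If H0 carries a centric configuration, it has a pole n0 (f n0 = 1, H0 = n0^perp) and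
      perp H0 is the point n0.  Points of hat-X then have unique normalised representatives
      v (f v = 0, B v n0 = 1), and a centric 2k-configuration is the same as a k-frame:
      normalised v_1..v_k with B v_i v_j = 1 (i /= j), giving the points v_i, v_i + n0.
   4. Any configuration containing a k-frame (k >= 3) adds only pairs {y, y + n0} of
      extensions y of the frame; so if the frame has exactly two extensions p, p' with
      B p p' = 1, it lies in exactly two (k+1)- and one (k+2)-configurations.
   5. Main geometric lemma: for a 4-frame the orthogonal complement W of n0, v_1, v_2, v_3 is
      an anisotropic plane (by the Witt index), and the extensions are the vectors
      u + b z + w with b^2 + b = 1 + f w for a suitable basis z, w of W; by the field facts
      this equation has exactly two roots, so every 4-frame has exactly two extensions p, p',
      and B p p' = 1.
   The corollary follows by combining 4 and 5 (for a decade, via the cube inside it). *)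

section \<open>Finite fields of characteristic two\<close>

context
  assumes char2: "(1::'a::field) + 1 = 0"
begin

lemma char2_add_self: "(x::'a) + x = 0"
proof -
  have "x + x = (1 + 1) * x" by (simp add: algebra_simps)
  then show ?thesis using char2 by simp
qed

lemma char2_two: "(2::'a) = 0"
  using char2 by simp

lemma char2_neg: "- (x::'a) = x"
  using char2_add_self by (simp add: add_eq_0_iff)

lemma char2_add_eq_0_iff: "(x::'a) + y = 0 \<longleftrightarrow> x = y"
  by (metis add_eq_0_iff char2_neg)

lemma char2_square_add: "((x::'a) + y) ^ 2 = x ^ 2 + y ^ 2"
proof -
  have "(x + y) ^ 2 = x ^ 2 + y ^ 2 + (x * y + x * y)" by (simp add: power2_eq_square algebra_simps)
  then show ?thesis by (simp add: char2_add_self)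
qed

text \<open>The Artin--Schreier map \<open>a \<mapsto> a^2 + a\<close> is additive with kernel \<open>{0, 1}\<close>.\<close>
lemma char2_artin_schreier_eq: "(a::'a) ^ 2 + a = b ^ 2 + b \<longleftrightarrow> b = a \<or> b = a + 1"
proof -
  have factor: "(a ^ 2 + a) + (b ^ 2 + b) = (a + b) * ((a + 1) + b)"
    using char2_square_add[of a b] by (simp add: power2_eq_square algebra_simps)
  have "a ^ 2 + a = b ^ 2 + b \<longleftrightarrow> (a + b) * ((a + 1) + b) = 0"
    unfolding factor[symmetric] char2_add_eq_0_iff ..
  also have "\<dots> \<longleftrightarrow> a = b \<or> a + 1 = b"
    by (simp add: char2_add_eq_0_iff)
  finally show ?thesis by auto
qed

end

text \<open>A field with \<open>2^n\<close> elements (\<open>n \<ge> 1\<close>) has characteristic two: otherwise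
  \<open>x \<mapsto> -x\<close> would pair off the \<open>2^n - 1\<close> nonzero elements.\<close>
lemma char2_of_card_pow2:
  assumes card: "CARD('a::{field,finite}) = 2 ^ n" and n: "n \<ge> 1"
  shows "(1::'a) + 1 = 0"
proof (rule ccontr)
  assume char: "(1::'a) + 1 \<noteq> 0"
  have ne: "(x::'a) \<noteq> - x" if "x \<noteq> 0" for x
  proof
    assume "x = - x"
    then have "(1 + 1) * x = 0" by (simp add: algebra_simps)
    then show False using char that by simp
  qed
  let ?N = "UNIV - {0::'a}"
  let ?C = "(\<lambda>x. {x, - x}) ` ?N"
  have two: "card c = 2" if "c \<in> ?C" for c
  proof -
    from that obtain x where "x \<noteq> 0" "c = {x, -x}" by auto
    then show ?thesis using ne by simp
  qed
  have disj: "c1 \<inter> c2 = {}" if "c1 \<in> ?C" "c2 \<in> ?C" "c1 \<noteq> c2" for c1 c2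
  proof -
    from that obtain x y where "c1 = {x, -x}" "c2 = {y, -y}" by auto
    with that(3) show ?thesis by auto
  qed
  have "2 * card ?C = card (\<Union>?C)"
    by (rule card_partition) (use two disj in auto)
  moreover have "\<Union>?C = ?N" by auto
  moreover have "card ?N = 2 ^ n - 1"
    using card by (simp add: card_Diff_subset)
  ultimately have "2 * card ?C = 2 ^ n - 1" by simp
  moreover have "odd ((2::nat) ^ n - 1)" using n by (simp add: odd_pos)
  ultimately show False by (metis even_mult_iff even_numeral)
qed

lemma finite_field_power_card_minus_one:
  assumes "(a::'a::{field,finite}) \<noteq> 0"
  shows "a ^ (CARD('a) - 1) = 1"
proof -
  let ?N = "UNIV - {0::'a}"
  have "prod (\<lambda>x. x) ?N = prod (\<lambda>x. a * x) ?N"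
    by (rule prod.reindex_bij_witness[of _ "\<lambda>y. a * y" "\<lambda>y. y / a"]) (use assms in auto)
  also have "\<dots> = a ^ card ?N * prod (\<lambda>x. x) ?N"
    by (simp add: prod.distrib)
  finally have "a ^ card ?N = 1"
    by (simp add: prod_zero_iff)
  moreover have "card ?N = CARD('a) - 1" by (simp add: card_Diff_subset)
  ultimately show ?thesis by simp
qed

lemma pow2_odd_mod3: "odd n \<Longrightarrow> (2::nat) ^ n mod 3 = 2"
proof (induction n rule: nat_less_induct)
  case (1 n)
  show ?case
  proof (cases "n = 1")
    case False
    with 1(2) obtain m where m: "n = Suc (Suc m)" "odd m"
      by (metis One_nat_def dvd_0_right even_Suc not0_implies_Suc)
    then have "2 ^ m mod 3 = (2::nat)" using 1 by auto
    then show ?thesis unfolding m by (simp add: mod_mult_right_eq[of 4, symmetric])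
  qed simp
qed

text \<open>Over \<open>GF(2^n)\<close> with \<open>n\<close> odd, \<open>a^2 + a = 1\<close> has no solution: a root would be a primitive
  cube root of unity, but \<open>3\<close> does not divide \<open>2^n - 1\<close>.\<close>
lemma odd_pow2_field_no_cube_root:
  assumes card: "CARD('a::{field,finite}) = 2 ^ n" and n: "odd n"
  shows "(a::'a) ^ 2 + a \<noteq> 1"
proof
  assume h: "a ^ 2 + a = 1"
  have "n \<ge> 1" using n by (cases n) auto
  then have char: "(1::'a) + 1 = 0" using char2_of_card_pow2 card by blast
  have a0: "a \<noteq> 0" using h by auto
  have "a ^ 2 = a + 1" using h by (metis char2_add_eq_0_iff[OF char] add.assoc add.commute)
  then have a3: "a ^ 3 = 1"
    using h by (simp add: power3_eq_cube power2_eq_square algebra_simps)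
  obtain m where m: "CARD('a) - 1 = 3 * m + 1"
  proof
    have "(2::nat) ^ n mod 3 = 2" using pow2_odd_mod3 n .
    then show "CARD('a) - 1 = 3 * ((CARD('a) - 1) div 3) + 1" using card by presburger
  qed
  have "a ^ (3 * m + 1) = 1" using finite_field_power_card_minus_one[OF a0] m by simp
  then have "a = 1" by (simp add: power_add power_mult a3)
  then show False using h char by simp
qed

context
  assumes char2: "(1::'a::{field,finite}) + 1 = 0"
begin

lemma char2_square_root: "\<exists>r. r ^ 2 = (c::'a)"
proof -
  have "inj (\<lambda>x::'a. x ^ 2)"
  proof (rule injI)
    fix x y :: 'a assume "x ^ 2 = y ^ 2"
    then have "(x + y) ^ 2 = 0" by (simp add: char2_square_add[OF char2] char2_add_self[OF char2])
    then show "x = y" by (simp add: char2_add_eq_0_iff[OF char2])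
  qed
  then have "surj (\<lambda>x::'a. x ^ 2)" using finite_UNIV_inj_surj[of "\<lambda>x::'a. x ^ 2"] by simp
  then show ?thesis by (metis surjD)
qed

lemma card_artin_schreier_values: "2 * card (range (\<lambda>a::'a. a ^ 2 + a)) = CARD('a)"
proof -
  define T where "T = (\<lambda>a::'a. a ^ 2 + a)"
  let ?C = "(\<lambda>h. T -` {h}) ` range T"
  have two: "card c = 2" if "c \<in> ?C" for c
  proof -
    from that obtain a where "c = T -` {T a}" by auto
    also have "\<dots> = {a, a + 1}"
      unfolding T_def using char2_artin_schreier_eq[OF char2] by (auto simp: char2_two[OF char2] add.assoc)
    finally show ?thesis by simp
  qed
  have disj: "c1 \<inter> c2 = {}" if "c1 \<in> ?C" "c2 \<in> ?C" "c1 \<noteq> c2" for c1 c2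
  proof -
    from that obtain a b where "c1 = T -` {T a}" "c2 = T -` {T b}" by auto
    with that(3) show ?thesis by auto
  qed
  have "2 * card ?C = card (\<Union>?C)"
    by (rule card_partition) (use two disj in auto)
  moreover have "\<Union>?C = UNIV" by auto
  moreover have "card ?C = card (range T)"
    by (rule card_image, rule inj_onI) auto
  ultimately show ?thesis unfolding T_def by simp
qed

lemma artin_schreier_value_sum:
  assumes n1: "\<forall>a::'a. a ^ 2 + a \<noteq> 1" and nc: "\<forall>a::'a. a ^ 2 + a \<noteq> c"
  shows "\<exists>a::'a. a ^ 2 + a = 1 + c"
proof -
  define T where "T = (\<lambda>a::'a. a ^ 2 + a)"
  let ?H = "range T"
  have Tadd: "T a + T b = T (a + b)" for a b
    unfolding T_def char2_square_add[OF char2] by (simp add: algebra_simps)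
  have swap: "z = x + y" if "x = y + z" for x y z :: 'a
  proof -
    have "x + y = z + (y + y)" using that by (simp add: ac_simps)
    then show ?thesis by (simp add: char2_add_self[OF char2])
  qed
  have disj: "?H \<inter> (\<lambda>h. c + h) ` ?H = {}"
  proof (rule ccontr)
    assume "?H \<inter> (\<lambda>h. c + h) ` ?H \<noteq> {}"
    then obtain a b where "T a = c + T b" by auto
    then have "c = T a + T b" by (metis swap add.commute)
    then show False using nc Tadd unfolding T_def by metis
  qed
  have "card (?H \<union> (\<lambda>h. c + h) ` ?H) = card ?H + card ((\<lambda>h. c + h) ` ?H)"
    using disj by (simp add: card_Un_disjoint)
  also have "card ((\<lambda>h. c + h) ` ?H) = card ?H" by (rule card_image) (auto intro: inj_onI)
  finally have "card (?H \<union> (\<lambda>h. c + h) ` ?H) = CARD('a)"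
    using card_artin_schreier_values unfolding T_def by simp
  then have "?H \<union> (\<lambda>h. c + h) ` ?H = UNIV" by (simp add: card_eq_UNIV_imp_eq_UNIV)
  moreover have "1 \<notin> ?H" using n1 unfolding T_def by auto
  ultimately obtain a where "1 = c + T a" by auto
  then have "T a = 1 + c" by (rule swap)
  then show ?thesis unfolding T_def by blast
qed

end

section \<open>Projective points and lines\<close>

lemma pt_mem: "x \<in> pt v \<longleftrightarrow> (\<exists>c. x = c *s v)"
  unfolding pt_def by auto

lemma pt_self: "v \<in> pt v"
  unfolding pt_mem by (rule exI[of _ 1]) simp

lemma pt_scale:
  assumes "(c::'a::field) \<noteq> 0"
  shows "pt (c *s v) = pt v"
proof
  show "pt (c *s v) \<subseteq> pt v"
  proof
    fix x assume "x \<in> pt (c *s v)"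
    then obtain d where "x = d *s (c *s v)" unfolding pt_mem by blast
    then have "x = (d * c) *s v" by (simp add: vector_smult_assoc)
    then show "x \<in> pt v" unfolding pt_mem by blast
  qed
  show "pt v \<subseteq> pt (c *s v)"
  proof
    fix x assume "x \<in> pt v"
    then obtain d where "x = d *s v" unfolding pt_mem by blast
    then have "x = (d / c) *s (c *s v)" using assms by (simp add: vector_smult_assoc)
    then show "x \<in> pt (c *s v)" unfolding pt_mem by blast
  qed
qed

lemma join_mem: "x \<in> join (pt v) (pt w) \<longleftrightarrow> (\<exists>a b. x = a *s v + b *s w)"
  unfolding join_def pt_mem by blast

lemma pt_subset_join: "pt v \<subseteq> join (pt v) (pt w)" "pt w \<subseteq> join (pt v) (pt w)"
proof
  fix x assume "x \<in> pt v"
  then obtain c where "x = c *s v + 0 *s w" unfolding pt_mem by auto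
  then show "x \<in> join (pt v) (pt w)" unfolding join_mem by blast
next
  show "pt w \<subseteq> join (pt v) (pt w)"
  proof
    fix x assume "x \<in> pt w"
    then obtain c where "x = 0 *s v + c *s w" unfolding pt_mem by auto
    then show "x \<in> join (pt v) (pt w)" unfolding join_mem by blast
  qed
qed

lemma join_add:
  assumes "P \<in> proj_points" "R \<in> proj_points" "x \<in> join P R" "y \<in> join P R"
  shows "x + (y::'a::field ^ 6) \<in> join P R"
proof -
  from assms(1,2) obtain p r where P: "P = pt p" and R: "R = pt r"
    unfolding proj_points_def by blast
  from assms(3,4) obtain a b a' b' where "x = a *s p + b *s r" "y = a' *s p + b' *s r"
    unfolding P R join_mem by blast
  then have "x + y = (a + a') *s p + (b + b') *s r"
    by (simp add: vector_sadd_rdistrib algebra_simps)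
  then show ?thesis unfolding P R join_mem by blast
qed

lemma centric_configE:
  assumes "centric_config f H0 k S"
  obtains x :: "nat \<Rightarrow> nat \<Rightarrow> ('a::field ^ 6) set"
  where "S = {x i a | i a. i \<in> {1..k} \<and> a \<in> {1,2}}"
    and "card S = 2 * k"
    and "S \<subseteq> Xhat_points f H0"
    and "\<And>i j a b. i \<in> {1..k} \<Longrightarrow> j \<in> {1..k} \<Longrightarrow> a \<in> {1,2} \<Longrightarrow> b \<in> {1,2} \<Longrightarrow>
           Xhat_adj f H0 (x i a) (x j b) \<longleftrightarrow> i \<noteq> j \<and> a \<noteq> b"
    and "\<And>i. i \<in> {1..k} \<Longrightarrow> perp f H0 \<subseteq> join (x i 1) (x i 2)"
proof -
  from assms[unfolded centric_config_def] obtain x :: "nat \<Rightarrow> nat \<Rightarrow> ('a ^ 6) set" where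
    S: "S = {x i a | i a. i \<in> {1..k} \<and> a \<in> {1,2}}" and card: "card S = 2 * k"
    and sub: "S \<subseteq> Xhat_points f H0"
    and adj: "\<forall>i\<in>{1..k}. \<forall>j\<in>{1..k}. \<forall>a\<in>{1,2}. \<forall>b\<in>{1,2}.
            Xhat_adj f H0 (x i a) (x j b) \<longleftrightarrow> i \<noteq> j \<and> a \<noteq> b"
    and perp: "\<forall>i\<in>{1..k}. perp f H0 \<subseteq> join (x i 1) (x i 2)"
    by (elim exE conjE)
  show thesis
  proof (rule that[OF S card sub])
    show "Xhat_adj f H0 (x i a) (x j b) \<longleftrightarrow> i \<noteq> j \<and> a \<noteq> b"
      if "i \<in> {1..k}" "j \<in> {1..k}" "a \<in> {1,2}" "b \<in> {1,2}" for i j a b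
      using adj that by (elim ballE) auto
    show "perp f H0 \<subseteq> join (x i 1) (x i 2)" if "i \<in> {1..k}" for i
      using perp that by (elim ballE) auto
  qed
qed


section \<open>The polar form of a quadratic form in characteristic two\<close>

locale char2_quadratic_form =
  fixes f :: "'a::{field,finite} ^ 6 \<Rightarrow> 'a"
  assumes char2: "(1::'a) + 1 = 0"
    and quadratic: "quadratic_form f"
begin

abbreviation B where "B \<equiv> polar f"

lemma neg_eq [simp]: "- (x::'a) = x"
  by (rule char2_neg[OF char2])

lemma two_eq_zero [simp]: "(2::'a) = 0"
  by (rule char2_two[OF char2])

lemma add_self [simp]: "(x::'a) + x = 0"
  by (rule char2_add_self[OF char2])

lemma add_self_left [simp]: "(x::'a) + (x + y) = y"
  by (simp add: add.assoc[symmetric])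

lemma add_eq_0_iff_eq: "(x::'a) + y = 0 \<longleftrightarrow> x = y"
  by (rule char2_add_eq_0_iff[OF char2])

lemma add_swap: "(x::'a) = y + z \<longleftrightarrow> x + y = z"
  by (metis add_self_left add.commute)

lemma vec_neg_eq [simp]: "- (x::'a ^ 6) = x"
  by (simp add: vec_eq_iff)

lemma vec_add_self [simp]: "(x::'a ^ 6) + x = 0"
  by (simp add: vec_eq_iff)

lemma vec_add_self_left [simp]: "(x::'a ^ 6) + (x + y) = y"
  by (simp add: add.assoc[symmetric])

lemma vec_add_eq_0_iff_eq: "(x::'a ^ 6) + y = 0 \<longleftrightarrow> x = y"
  by (metis add_eq_0_iff vec_neg_eq)

lemma vec_add_swap: "(x::'a ^ 6) = y + z \<longleftrightarrow> x + y = z"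
  by (metis vec_add_self_left add.commute)

definition coeffs :: "6 \<Rightarrow> 6 \<Rightarrow> 'a" where
  "coeffs = (SOME A. \<forall>v. f v = (\<Sum>i\<in>UNIV. \<Sum>j\<in>UNIV. A i j * v$i * v$j))"

lemma f_coeffs: "f v = (\<Sum>i\<in>UNIV. \<Sum>j\<in>UNIV. coeffs i j * v$i * v$j)"
  using someI_ex[OF quadratic[unfolded quadratic_form_def]] unfolding coeffs_def by blast

lemma B_coeffs: "B x y = (\<Sum>i\<in>UNIV. \<Sum>j\<in>UNIV. coeffs i j * (x$i * y$j + y$i * x$j))"
proof -
  have e: "\<And>i j. coeffs i j * (x+y)$i * (x+y)$j = coeffs i j * x$i * x$j
      + coeffs i j * (x$i * y$j + y$i * x$j) + coeffs i j * y$i * y$j"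
    by (simp add: algebra_simps)
  have "f (x+y) = f x + (\<Sum>i\<in>UNIV. \<Sum>j\<in>UNIV. coeffs i j * (x$i * y$j + y$i * x$j)) + f y"
    unfolding f_coeffs[of "x+y"] f_coeffs[of x] f_coeffs[of y] e by (simp only: sum.distrib)
  then show ?thesis unfolding polar_def by simp
qed

lemma B_add_left: "B (x + y) z = B x z + B y z"
proof -
  have e: "\<And>i j. coeffs i j * ((x+y)$i * z$j + z$i * (x+y)$j)
      = coeffs i j * (x$i * z$j + z$i * x$j) + coeffs i j * (y$i * z$j + z$i * y$j)"
    by (simp add: algebra_simps)
  show ?thesis unfolding B_coeffs e by (simp only: sum.distrib)
qed

lemma B_sym: "B x y = B y x"
  unfolding B_coeffs by (simp only: add.commute)

lemma B_add_right: "B z (x + y) = B z x + B z y"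
  using B_add_left B_sym by metis

lemma B_smult_left: "B (c *s x) y = c * B x y"
proof -
  have e: "\<And>i j. coeffs i j * ((c *s x)$i * y$j + y$i * (c *s x)$j)
      = c * (coeffs i j * (x$i * y$j + y$i * x$j))"
    by (simp add: algebra_simps)
  show ?thesis unfolding B_coeffs e by (simp only: sum_distrib_left)
qed

lemma B_smult_right: "B y (c *s x) = c * B y x"
  using B_smult_left B_sym by metis

lemma B_self [simp]: "B x x = 0"
  unfolding B_coeffs by simp

lemma f_smult: "f (c *s x) = c ^ 2 * f x"
proof -
  have e: "\<And>i j. coeffs i j * (c *s x)$i * (c *s x)$j = c ^ 2 * (coeffs i j * x$i * x$j)"
    by (simp add: algebra_simps power2_eq_square)
  show ?thesis unfolding f_coeffs[of "c *s x"] f_coeffs[of x] e by (simp only: sum_distrib_left)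
qed

lemma f_zero [simp]: "f 0 = 0"
  using f_smult[of 0 0] by simp

lemma B_zero_left [simp]: "B 0 x = 0"
  using B_smult_left[of 0 x x] by simp

lemma B_zero_right [simp]: "B x 0 = 0"
  using B_smult_right[of x 0 x] by simp

lemma f_add: "f (x + y) = f x + f y + B x y"
  unfolding polar_def by simp

lemmas form_simps = B_add_left B_add_right B_smult_left B_smult_right f_add f_smult

lemma B_sum_right: "B x (\<Sum>i\<in>A. g i) = (\<Sum>i\<in>A. B x (g i))"
  by (induction A rule: infinite_finite_induct) (simp_all add: B_add_right)

lemma B_basis_expansion: "B x w = (\<Sum>j\<in>UNIV. w$j * B x (axis j 1))"
proof -
  have "B x w = B x (\<Sum>j\<in>UNIV. w$j *s axis j 1)" by (simp add: basis_expansion)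
  also have "\<dots> = (\<Sum>j\<in>UNIV. w$j * B x (axis j 1))" by (simp add: B_sum_right B_smult_right)
  finally show ?thesis .
qed

text \<open>Two distinct singular points of \<open>Xhat\<close> are adjacent exactly when their representatives are
  orthogonal: the line they span is then totally singular and not inside \<open>H0\<close>.\<close>
lemma Xhat_adj_iff_orthogonal:
  assumes P: "pt v \<in> Xhat_points f H0" and R: "pt w \<in> Xhat_points f H0"
    and v: "v \<noteq> 0" "f v = 0" and w: "w \<noteq> 0" "f w = 0"
  shows "Xhat_adj f H0 (pt v) (pt w) \<longleftrightarrow> pt v \<noteq> pt w \<and> B v w = 0"
proof
  assume adj: "Xhat_adj f H0 (pt v) (pt w)"
  then have ne: "pt v \<noteq> pt w" unfolding Xhat_adj_def by blast
  from adj obtain L where L: "L \<in> ts_lines f" "pt v \<subseteq> L" "pt w \<subseteq> L"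
    unfolding Xhat_adj_def by blast
  from L(1) obtain P R where PR: "L = join P R" "P \<in> proj_points" "R \<in> proj_points"
      and sing: "\<forall>x\<in>join P R. f x = 0"
    unfolding ts_lines_def by blast
  have "v \<in> L" "w \<in> L" using L pt_self by blast+
  then have "v + w \<in> L" using join_add PR by blast
  then have "f (v + w) = 0" using sing PR by blast
  then have "B v w = 0" using v w by (simp add: f_add)
  with ne show "pt v \<noteq> pt w \<and> B v w = 0" by blast
next
  assume h: "pt v \<noteq> pt w \<and> B v w = 0"
  let ?L = "join (pt v) (pt w)"
  have pp: "pt v \<in> proj_points" "pt w \<in> proj_points"
    unfolding proj_points_def using v w by blast+
  have sing: "\<forall>x\<in>?L. f x = 0"
  proof
    fix x assume "x \<in> ?L"
    then obtain a b where "x = a *s v + b *s w" unfolding join_mem by blast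
    then show "f x = 0" using v w h by (simp add: form_simps)
  qed
  have Lts: "?L \<in> ts_lines f" unfolding ts_lines_def using pp h sing by blast
  have sub: "pt v \<subseteq> ?L" "pt w \<subseteq> ?L" by (rule pt_subset_join)+
  have "\<not> pt v \<subseteq> H0" using P unfolding Xhat_points_def by blast
  then have "\<not> ?L \<subseteq> H0" using sub(1) by blast
  then show "Xhat_adj f H0 (pt v) (pt w)"
    unfolding Xhat_adj_def using P R h Lts sub by blast
qed

end

section \<open>The pole of a non-degenerate hyperplane\<close>

context char2_quadratic_form
begin

text \<open>We take \<open>m\<close> in the
  kernel of the additive map \<open>\<phi> y = (B y e\<^sub>j h\<^sub>k + B y e\<^sub>k h\<^sub>j)\<^sub>j\<close> (with \<open>h\<^sub>k \<noteq> 0\<close>), which is not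
  injective because its image misses \<open>e\<^sub>k\<close>; then \<open>B m w\<close> is a multiple of \<open>h \<cdot> w\<close>.\<close>
lemma exists_orthogonal_to_hyperplane:
  assumes "is_hyperplane H0"
  shows "\<exists>m. m \<noteq> 0 \<and> (\<forall>w\<in>H0. B m w = 0)"
proof -
  obtain h :: "'a ^ 6" where h: "h \<noteq> 0" and H0: "H0 = {v. (\<Sum>i\<in>UNIV. h$i * v$i) = 0}"
    using assms unfolding is_hyperplane_def by blast
  obtain k where k: "h$k \<noteq> 0" using h by (metis vec_eq_iff zero_index)
  define \<phi> where "\<phi> y = (\<chi> j. B y (axis j 1) * h$k + B y (axis k 1) * h$j)" for y
  have \<phi>_k: "\<phi> y $ k = 0" for y unfolding \<phi>_def by (simp add: mult.commute)
  have \<phi>_add: "\<phi> (y + y') = \<phi> y + \<phi> y'" for y y'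
    unfolding \<phi>_def by (simp add: vec_eq_iff B_add_left algebra_simps)
  have "\<not> inj \<phi>"
  proof
    assume "inj \<phi>"
    then have "range \<phi> = UNIV" by (simp add: card_image card_eq_UNIV_imp_eq_UNIV)
    then obtain y where "\<phi> y = axis k 1" by (metis UNIV_I imageE)
    then show False using \<phi>_k[of y] by simp
  qed
  then obtain y y' where yy: "y \<noteq> y'" "\<phi> y = \<phi> y'" unfolding inj_def by blast
  define m where "m = y + y'"
  have "m \<noteq> 0" unfolding m_def using yy(1) vec_add_eq_0_iff_eq by blast
  have "\<phi> m = 0" unfolding m_def \<phi>_add yy(2) by simp
  then have proportional: "h$k * B m (axis j 1) = B m (axis k 1) * h$j" for j
    unfolding \<phi>_def by (simp add: vec_eq_iff add_eq_0_iff_eq mult.commute)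
  have "B m w = 0" if "w \<in> H0" for w
  proof -
    have "h$k * B m w = (\<Sum>j\<in>UNIV. w$j * (h$k * B m (axis j 1)))"
      unfolding B_basis_expansion[of m w] by (simp add: sum_distrib_left algebra_simps)
    also have "\<dots> = B m (axis k 1) * (\<Sum>j\<in>UNIV. h$j * w$j)"
      unfolding proportional by (simp add: sum_distrib_left algebra_simps)
    also have "\<dots> = 0" using that H0 by simp
    finally show ?thesis using k by simp
  qed
  with \<open>m \<noteq> 0\<close> show ?thesis by blast
qed

lemma hyperplane_eq_orthogonal:
  assumes hyp: "is_hyperplane H0" and m_perp: "\<forall>w\<in>H0. B m w = 0" and y: "B m y \<noteq> 0"
  shows "z \<in> H0 \<longleftrightarrow> B z m = 0"
proof
  assume "z \<in> H0" then show "B z m = 0" using m_perp B_sym by metis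
next
  assume zm: "B z m = 0"
  obtain h :: "'a ^ 6" where H0: "H0 = {v. (\<Sum>i\<in>UNIV. h$i * v$i) = 0}"
    using hyp unfolding is_hyperplane_def by blast
  show "z \<in> H0"
  proof (rule ccontr)
    assume "z \<notin> H0"
    define d where "d = (\<Sum>i\<in>UNIV. h$i * z$i)"
    have d: "d \<noteq> 0" using \<open>z \<notin> H0\<close> H0 unfolding d_def by blast
    define c where "c = (\<Sum>i\<in>UNIV. h$i * y$i) / d"
    have "(\<Sum>i\<in>UNIV. h$i * (y + c *s z)$i) = (\<Sum>i\<in>UNIV. h$i * y$i) + c * d"
      unfolding d_def by (simp add: algebra_simps sum.distrib sum_distrib_left)
    also have "\<dots> = 0" unfolding c_def using d by simp
    finally have "y + c *s z \<in> H0" using H0 by blast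
    then have "B m (y + c *s z) = 0" using m_perp by blast
    moreover have "B m z = 0" using zm B_sym by metis
    ultimately show False using y by (simp add: B_add_right B_smult_right)
  qed
qed

lemma pole_of_hyperplane:
  assumes hyp: "is_hyperplane H0" and nd: "nondeg_on H0 f"
    and m_perp: "\<forall>w\<in>H0. B m w = 0" and y: "B m y \<noteq> 0"
  shows "\<exists>n0. f n0 = 1 \<and> (\<forall>z. z \<in> H0 \<longleftrightarrow> B z n0 = 0)"
proof -
  have H0: "z \<in> H0 \<longleftrightarrow> B z m = 0" for z by (rule hyperplane_eq_orthogonal[OF hyp m_perp y])
  have "m \<noteq> 0" using y by auto
  moreover have "m \<in> H0" unfolding H0 by simp
  ultimately have fm: "f m \<noteq> 0"
    using nd m_perp unfolding nondeg_on_def by blast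
  obtain s where s: "s ^ 2 = 1 / f m" using char2_square_root[OF char2] by blast
  then have "s \<noteq> 0" using fm by auto
  define n0 where "n0 = s *s m"
  have "f n0 = 1" unfolding n0_def using s fm by (simp add: f_smult)
  moreover have "z \<in> H0 \<longleftrightarrow> B z n0 = 0" for z
    unfolding n0_def H0 using \<open>s \<noteq> 0\<close> by (simp add: B_smult_right)
  ultimately show ?thesis by blast
qed

lemma join_not_radical:
  assumes B12: "B w1 w2 \<noteq> 0" and m: "m \<in> join (pt w1) (pt w2)" "m \<noteq> 0"
  shows "\<exists>y. B m y \<noteq> 0"
proof (rule ccontr)
  assume "\<not> ?thesis"
  then have "B m w1 = 0" "B m w2 = 0" by auto
  obtain \<alpha> \<beta> where m_eq: "m = \<alpha> *s w1 + \<beta> *s w2" using m(1) unfolding join_mem by blast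
  have "\<beta> * B w2 w1 = 0" "\<alpha> * B w1 w2 = 0"
    using \<open>B m w1 = 0\<close> \<open>B m w2 = 0\<close> unfolding m_eq by (simp_all add: B_add_left B_smult_left)
  then have "\<alpha> = 0" "\<beta> = 0" using B12 B_sym[of w2 w1] by auto
  then show False using m(2) m_eq by simp
qed

end

section \<open>Normalised representatives of the points of \<open>Xhat\<close>\<close>

locale hat_geometry = char2_quadratic_form f for f :: "'a::{field,finite} ^ 6 \<Rightarrow> 'a" +
  fixes H0 :: "('a ^ 6) set" and n0 :: "'a ^ 6"
  assumes f_n0: "f n0 = 1"
    and H0_pole: "\<And>x. x \<in> H0 \<longleftrightarrow> B x n0 = 0"
begin

definition normal :: "'a ^ 6 \<Rightarrow> bool" where
  "normal v \<longleftrightarrow> f v = 0 \<and> B v n0 = 1"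

lemma normal_nonzero: "normal v \<Longrightarrow> v \<noteq> 0"
  unfolding normal_def by auto

lemma normal_add_n0: "normal v \<Longrightarrow> normal (v + n0)"
  unfolding normal_def by (simp add: f_add B_add_left f_n0)

lemma normal_B_n0: "normal v \<Longrightarrow> B v n0 = 1" "normal v \<Longrightarrow> B n0 v = 1"
  unfolding normal_def by (simp_all add: B_sym)

lemma pt_n0_subset_perp: "pt n0 \<subseteq> perp f H0"
proof
  fix y assume "y \<in> pt n0"
  then obtain c where "y = c *s n0" unfolding pt_mem by blast
  moreover have "B n0 w = 0" if "w \<in> H0" for w using that H0_pole B_sym by metis
  ultimately show "y \<in> perp f H0" unfolding perp_def by (simp add: B_smult_left)
qed

lemma normal_pt_eq_iff:
  assumes "normal v" "normal w"
  shows "pt v = pt w \<longleftrightarrow> v = w"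
proof
  assume "pt v = pt w"
  then have "w \<in> pt v" using pt_self[of w] by simp
  then obtain c where c: "w = c *s v" unfolding pt_mem by blast
  then have "B w n0 = c * B v n0" by (simp add: B_smult_left)
  then have "c = 1" using assms unfolding normal_def by simp
  then show "v = w" using c by simp
qed simp

lemma normal_pt_Xhat: "normal v \<Longrightarrow> pt v \<in> Xhat_points f H0"
proof -
  assume v: "normal v"
  then have "pt v \<in> sing_points f"
    unfolding sing_points_def using normal_nonzero[OF v] unfolding normal_def by blast
  moreover have "v \<notin> H0" using v unfolding H0_pole normal_def by simp
  then have "\<not> pt v \<subseteq> H0" using pt_self by blast
  ultimately show ?thesis unfolding Xhat_points_def by blast
qed

lemma Xhat_normal_rep:
  assumes "P \<in> Xhat_points f H0"
  obtains v where "normal v" "P = pt v"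
proof -
  from assms obtain w where P: "P = pt w" and w: "f w = 0" and nsub: "\<not> pt w \<subseteq> H0"
    unfolding Xhat_points_def sing_points_def by blast
  from nsub obtain x where "x \<in> pt w" "x \<notin> H0" by blast
  then obtain c where "c *s w \<notin> H0" unfolding pt_mem by blast
  then have b: "B w n0 \<noteq> 0" unfolding H0_pole by (simp add: B_smult_left)
  define v where "v = (1 / B w n0) *s w"
  have "normal v" unfolding normal_def v_def using b w by (simp add: f_smult B_smult_left)
  moreover have "P = pt v" unfolding P v_def using b by (simp add: pt_scale)
  ultimately show thesis by (rule that)
qed

lemma normal_adj_iff:
  assumes v: "normal v" and w: "normal w"
  shows "Xhat_adj f H0 (pt v) (pt w) \<longleftrightarrow> v \<noteq> w \<and> B v w = 0"
  using Xhat_adj_iff_orthogonal[OF normal_pt_Xhat[OF v] normal_pt_Xhat[OF w]]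
    normal_nonzero[OF v] normal_nonzero[OF w] v w normal_pt_eq_iff[OF v w]
  unfolding normal_def by blast

lemma normal_partner:
  assumes v: "normal v" and w: "normal w" and n0: "n0 \<in> join (pt v) (pt w)"
  shows "w = v + n0"
proof -
  from n0 obtain \<alpha> \<beta> where e: "n0 = \<alpha> *s v + \<beta> *s w" unfolding join_mem by blast
  have "B n0 n0 = \<alpha> * B v n0 + \<beta> * B w n0"
    by (subst (1) e) (simp add: B_add_left B_smult_left)
  then have "\<beta> = \<alpha>" using v w add_eq_0_iff_eq unfolding normal_def by simp
  have bw: "\<beta> *s w = n0 + \<alpha> *s v"
    using e unfolding vec_add_swap[symmetric] by (simp add: add.commute)
  have "f (\<beta> *s w) = 0" using w unfolding normal_def by (simp add: f_smult)
  moreover have "f (n0 + \<alpha> *s v) = 1 + \<alpha>"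
    using v normal_B_n0[OF v] unfolding normal_def by (simp add: f_add f_smult f_n0 B_smult_right)
  ultimately have "\<alpha> = 1" using bw add_eq_0_iff_eq by metis
  then show ?thesis using bw \<open>\<beta> = \<alpha>\<close> by (simp add: add.commute)
qed

lemma perp_eq_pole:
  assumes w: "normal w" "normal w'" and w3: "normal w3" "B w w3 \<noteq> 0"
    and line: "perp f H0 \<subseteq> join (pt w) (pt w')"
  shows "perp f H0 = pt n0"
proof
  show "pt n0 \<subseteq> perp f H0" by (rule pt_n0_subset_perp)
  have "w' = w + n0"
    using normal_partner[OF w] line pt_n0_subset_perp pt_self[of n0] by blast
  show "perp f H0 \<subseteq> pt n0"
  proof
    fix y assume y: "y \<in> perp f H0"
    then have "y \<in> join (pt w) (pt (w + n0))" using line \<open>w' = w + n0\<close> by blast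
    then obtain \<alpha> \<beta> where y_eq: "y = \<alpha> *s w + \<beta> *s (w + n0)" unfolding join_mem by blast
    have "w + w3 \<in> H0" unfolding H0_pole using w(1) w3(1) unfolding normal_def by (simp add: B_add_left)
    then have "B y (w + w3) = 0" using y unfolding perp_def by blast
    moreover have "B y (w + w3) = (\<alpha> + \<beta>) * B w w3"
      unfolding y_eq using w(1) w3(1) normal_B_n0 unfolding normal_def
      by (simp add: B_add_left B_add_right B_smult_left algebra_simps)
    ultimately have "\<beta> = \<alpha>" using w3(2) add_eq_0_iff_eq by simp
    then have "y = \<alpha> *s n0" unfolding y_eq by (simp add: vector_add_ldistrib)
    then show "y \<in> pt n0" unfolding pt_mem by blast
  qed
qed

end

lemma centric_config_base_points:
  assumes cfg: "centric_config f H0 k S" and k: "2 \<le> k"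
  obtains P1 P2 P3 where "P1 \<in> Xhat_points f H0" "P2 \<in> Xhat_points f H0" "P3 \<in> Xhat_points f H0"
    "P1 \<noteq> P2" "P1 \<noteq> P3" "\<not> Xhat_adj f H0 P1 P2" "\<not> Xhat_adj f H0 P1 P3"
    "perp f H0 \<subseteq> join P1 P2"
proof -
  obtain x :: "nat \<Rightarrow> nat \<Rightarrow> ('a::field ^ 6) set" where
    S: "S = {x i a | i a. i \<in> {1..k} \<and> a \<in> {1,2}}" and "card S = 2 * k" and sub: "S \<subseteq> Xhat_points f H0"
    and adj: "\<And>i j a b. i \<in> {1..k} \<Longrightarrow> j \<in> {1..k} \<Longrightarrow> a \<in> {1,2} \<Longrightarrow> b \<in> {1,2} \<Longrightarrow>
           Xhat_adj f H0 (x i a) (x j b) \<longleftrightarrow> i \<noteq> j \<and> a \<noteq> b"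
    and perp: "\<And>i. i \<in> {1..k} \<Longrightarrow> perp f H0 \<subseteq> join (x i 1) (x i 2)"
    using cfg by (elim centric_configE) blast
  have idx: "(1::nat) \<in> {1..k}" "(2::nat) \<in> {1..k}" "(1::nat) \<in> {1,2}" "(2::nat) \<in> {1,2}"
    using k by auto
  have X: "x i a \<in> Xhat_points f H0" if "i \<in> {1..k}" "a \<in> {1,2}" for i a
    using that sub unfolding S by blast
  have "Xhat_adj f H0 (x 2 1) (x 1 2)" "\<not> Xhat_adj f H0 (x 2 1) (x 1 1)"
    "Xhat_adj f H0 (x 1 2) (x 2 1)" "\<not> Xhat_adj f H0 (x 1 2) (x 1 1)"
    "\<not> Xhat_adj f H0 (x 1 1) (x 1 2)" "\<not> Xhat_adj f H0 (x 1 1) (x 2 1)"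
    using adj[OF idx(2,1,3,4)] adj[OF idx(2,1,3,3)] adj[OF idx(1,2,4,3)] adj[OF idx(1,1,4,3)]
      adj[OF idx(1,1,3,4)] adj[OF idx(1,2,3,3)] by simp_all
  then have "x 1 1 \<noteq> x 1 2" "x 1 1 \<noteq> x 2 1" by metis+
  then show thesis
    using that X[OF idx(1,3)] X[OF idx(1,4)] X[OF idx(2,3)] perp[OF idx(1)] \<open>\<not> Xhat_adj f H0 (x 1 1) (x 1 2)\<close>
      \<open>\<not> Xhat_adj f H0 (x 1 1) (x 2 1)\<close> by blast
qed

lemma (in char2_quadratic_form) centric_config_pole:
  assumes hyp: "is_hyperplane H0" and nd: "nondeg_on H0 f"
    and cfg: "centric_config f H0 k S" and k: "2 \<le> k"
  shows "\<exists>n0. hat_geometry f H0 n0 \<and> perp f H0 = pt n0"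
proof -
  obtain P1 P2 P3 where P: "P1 \<in> Xhat_points f H0" "P2 \<in> Xhat_points f H0" "P3 \<in> Xhat_points f H0"
    "P1 \<noteq> P2" "P1 \<noteq> P3" "\<not> Xhat_adj f H0 P1 P2" "\<not> Xhat_adj f H0 P1 P3"
    and line: "perp f H0 \<subseteq> join P1 P2"
    using centric_config_base_points[OF cfg k] by blast
  obtain w1 w2 where w: "w1 \<noteq> 0" "f w1 = 0" "P1 = pt w1" "w2 \<noteq> 0" "f w2 = 0" "P2 = pt w2"
    using P(1,2) unfolding Xhat_points_def sing_points_def by blast
  have "B w1 w2 \<noteq> 0" using Xhat_adj_iff_orthogonal[of w1 H0 w2] P w by blast
  obtain m where m: "m \<noteq> 0" "\<forall>w\<in>H0. B m w = 0"
    using exists_orthogonal_to_hyperplane[OF hyp] by blast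
  then have "m \<in> join (pt w1) (pt w2)" using line w unfolding perp_def by blast
  then obtain y where "B m y \<noteq> 0" using join_not_radical \<open>B w1 w2 \<noteq> 0\<close> m(1) by blast
  then obtain n0 where "f n0 = 1" "\<forall>z. z \<in> H0 \<longleftrightarrow> B z n0 = 0"
    using pole_of_hyperplane[OF hyp nd m(2)] by blast
  then interpret hat_geometry f H0 n0 by unfold_locales auto
  obtain w w' w3 where n: "normal w" "normal w'" "normal w3" "P1 = pt w" "P2 = pt w'" "P3 = pt w3"
    using Xhat_normal_rep P(1-3) by metis
  then have "B w w3 \<noteq> 0" using normal_adj_iff P(5,7) by blast
  then have "perp f H0 = pt n0" using perp_eq_pole n line by blast
  then show ?thesis using hat_geometry_axioms by blast
qed

section \<open>Frames and centric configurations\<close>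

text \<open>A centric \<open>2k\<close>-configuration is then the
  same as a \<^emph>\<open>\<open>k\<close>-frame\<close>: normalised vectors \<open>v 1, \<dots>, v k\<close> with \<open>B (v i) (v j) = 1\<close> for
  \<open>i \<noteq> j\<close>, whose configuration consists of the points \<open>pt (v i)\<close> and \<open>pt (v i + n0)\<close>.\<close>

locale centric_geometry = hat_geometry f H0 n0 for f :: "'a::{field,finite} ^ 6 \<Rightarrow> 'a" and H0 n0 +
  assumes perp_H0: "perp f H0 = pt n0"
begin

definition frame :: "nat \<Rightarrow> (nat \<Rightarrow> 'a ^ 6) \<Rightarrow> bool" where
  "frame k v \<longleftrightarrow> (\<forall>i\<in>{1..k}. normal (v i)) \<and>
     (\<forall>i\<in>{1..k}. \<forall>j\<in>{1..k}. i \<noteq> j \<longrightarrow> B (v i) (v j) = 1)"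

text \<open>The two points of \<open>Xhat\<close> on the line through \<open>n0\<close> and \<open>pt y\<close>.\<close>
definition pair :: "'a ^ 6 \<Rightarrow> ('a ^ 6) set set" where
  "pair y = {pt y, pt (y + n0)}"

definition frame_points :: "nat \<Rightarrow> (nat \<Rightarrow> 'a ^ 6) \<Rightarrow> ('a ^ 6) set set" where
  "frame_points k v = (\<Union>i\<in>{1..k}. pair (v i))"

definition extensions :: "nat \<Rightarrow> (nat \<Rightarrow> 'a ^ 6) \<Rightarrow> ('a ^ 6) set" where
  "extensions k v = {y. normal y \<and> (\<forall>i\<in>{1..k}. B y (v i) = 1)}"

lemma frame_normal: "frame k v \<Longrightarrow> i \<in> {1..k} \<Longrightarrow> normal (v i)"
  unfolding frame_def by blast

lemma frame_B: "frame k v \<Longrightarrow> i \<in> {1..k} \<Longrightarrow> j \<in> {1..k} \<Longrightarrow> i \<noteq> j \<Longrightarrow> B (v i) (v j) = 1"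
  unfolding frame_def by blast

lemma frame_B_n0: "frame k v \<Longrightarrow> i \<in> {1..k} \<Longrightarrow> B (v i) n0 = 1 \<and> B n0 (v i) = 1"
  using frame_normal[of k v i] normal_B_n0[of "v i"] by simp

lemma third_index:
  assumes "3 \<le> (k::nat)" "i \<in> {1..k}" "j \<in> {1..k}"
  obtains l where "l \<in> {1..k}" "l \<noteq> i" "l \<noteq> j"
proof -
  have "(1::nat) \<in> {1..k}" "2 \<in> {1..k}" "3 \<in> {1..k}" using assms(1) by auto
  moreover have "(1 \<noteq> i \<and> 1 \<noteq> j) \<or> (2 \<noteq> i \<and> 2 \<noteq> j) \<or> (3 \<noteq> i \<and> (3::nat) \<noteq> j)" by auto
  ultimately show thesis using that by blast
qed

lemma pair_add_n0: "pair (y + n0) = pair y"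
  unfolding pair_def by (simp add: add.assoc insert_commute)

lemma pair_subset_frame_points: "i \<in> {1..k} \<Longrightarrow> pair (v i) \<subseteq> frame_points k v"
  unfolding frame_points_def by blast

lemma frame_point_rep:
  assumes u: "frame m u" and y: "normal y" and P: "pt y \<in> frame_points m u"
  obtains s where "s \<in> {1..m}" "y = u s \<or> y = u s + n0"
proof -
  from P obtain s where s: "s \<in> {1..m}" "pt y = pt (u s) \<or> pt y = pt (u s + n0)"
    unfolding frame_points_def pair_def by blast
  have "normal (u s)" "normal (u s + n0)" using frame_normal[OF u s(1)] normal_add_n0 by auto
  then have "y = u s \<or> y = u s + n0" using s(2) normal_pt_eq_iff y by blast
  with s(1) show thesis by (rule that)
qed

lemma pair_subset_frame_points_if_meets:
  assumes u: "frame m u" and y: "normal y" and P: "P \<in> pair y" "P \<in> frame_points m u"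
  shows "pair y \<subseteq> frame_points m u"
proof -
  have closed: "pair z \<subseteq> frame_points m u" if z: "normal z" "pt z \<in> frame_points m u" for z
  proof -
    obtain s where "s \<in> {1..m}" "z = u s \<or> z = u s + n0" using frame_point_rep[OF u z] .
    then show ?thesis using pair_subset_frame_points[of s m u] pair_add_n0[of "u s"] by auto
  qed
  from P(1) consider "P = pt y" | "P = pt (y + n0)" unfolding pair_def by blast
  then show ?thesis
  proof cases
    case 1
    then show ?thesis using closed[OF y] P(2) by simp
  next
    case 2
    then have "pair (y + n0) \<subseteq> frame_points m u" using closed[OF normal_add_n0[OF y]] P(2) by simp
    then show ?thesis by (simp add: pair_add_n0)
  qed
qed

end

context centric_geometry
begin

definition frame_vec :: "(nat \<Rightarrow> 'a ^ 6) \<Rightarrow> nat \<Rightarrow> nat \<Rightarrow> 'a ^ 6" where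
  "frame_vec v i a = (if a = 1 then v i else v i + n0)"

lemma frame_vec_normal: "frame k v \<Longrightarrow> i \<in> {1..k} \<Longrightarrow> normal (frame_vec v i a)"
  unfolding frame_vec_def using frame_normal normal_add_n0 by simp

lemma frame_vec_B:
  assumes v: "frame k v" and ij: "i \<in> {1..k}" "j \<in> {1..k}" and ab: "a \<in> {1,2}" "b \<in> {1,2}"
  shows "B (frame_vec v i a) (frame_vec v j b) = (if i = j then 0 else 1) + (if a = b then 0 else 1)"
proof -
  have "B (v i) (v j) = (if i = j then 0 else 1)" using frame_B[OF v ij] by auto
  then show ?thesis using ab frame_B_n0[OF v ij(1)] frame_B_n0[OF v ij(2)] unfolding frame_vec_def
    by (auto simp: B_add_left B_add_right)
qed

text \<open>In a frame with at least three vectors, the \<open>2k\<close> vectors \<open>frame_vec v i a\<close> are distinct: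
  equal vectors are orthogonal, which forces \<open>i = j \<longleftrightarrow> a = b\<close>, and a third index separates
  \<open>v i\<close> from \<open>v j + n0\<close>.\<close>
lemma frame_vec_inj:
  assumes k: "3 \<le> k" and v: "frame k v" and ij: "i \<in> {1..k}" "j \<in> {1..k}"
    and ab: "a \<in> {1,2}" "b \<in> {1,2}" and eq: "frame_vec v i a = frame_vec v j b"
  shows "i = j \<and> a = b"
proof -
  have "B (frame_vec v i a) (frame_vec v j b) = 0" using eq by simp
  then have iff: "i = j \<longleftrightarrow> a = b" using frame_vec_B[OF v ij ab] by (auto split: if_splits)
  show ?thesis
  proof (cases "i = j")
    case False
    obtain l where l: "l \<in> {1..k}" "l \<noteq> i" "l \<noteq> j" using third_index[OF k ij] .
    have "B (frame_vec v i a) (frame_vec v l 1) = B (frame_vec v j b) (frame_vec v l 1)"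
      using eq by simp
    then have "a = b" using frame_vec_B[OF v ij(1) l(1) ab(1)] frame_vec_B[OF v ij(2) l(1) ab(2)] l ab
      by (auto split: if_splits)
    then show ?thesis using iff by simp
  qed (use iff in simp)
qed

lemma frame_points_eq:
  "frame_points k v = {pt (frame_vec v i a) | i a. i \<in> {1..k} \<and> a \<in> {1,2}}"
proof (intro equalityI subsetI)
  fix P assume "P \<in> frame_points k v"
  then obtain i where i: "i \<in> {1..k}" "P = pt (v i) \<or> P = pt (v i + n0)"
    unfolding frame_points_def pair_def by blast
  then have "P = pt (frame_vec v i 1) \<or> P = pt (frame_vec v i 2)" unfolding frame_vec_def by simp
  then show "P \<in> {pt (frame_vec v i a) | i a. i \<in> {1..k} \<and> a \<in> {1,2}}" using i(1) by blast
next
  fix P assume "P \<in> {pt (frame_vec v i a) | i a. i \<in> {1..k} \<and> a \<in> {1,2}}"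
  then obtain i a where "i \<in> {1..k}" "a \<in> {1::nat,2}" "P = pt (frame_vec v i a)" by blast
  then show "P \<in> frame_points k v" unfolding frame_points_def pair_def frame_vec_def by auto
qed

lemma card_frame_points:
  assumes k: "3 \<le> k" and v: "frame k v"
  shows "card (frame_points k v) = 2 * k"
proof -
  let ?I = "{1..k} \<times> {1::nat, 2}" and ?x = "\<lambda>(i, a). pt (frame_vec v i a)"
  have image: "frame_points k v = ?x ` ?I"
    unfolding frame_points_eq
  proof (intro equalityI subsetI)
    fix P assume "P \<in> {pt (frame_vec v i a) | i a. i \<in> {1..k} \<and> a \<in> {1,2}}"
    then obtain i a where "i \<in> {1..k}" "a \<in> {1::nat, 2}" "P = pt (frame_vec v i a)" by blast
    then have "(i, a) \<in> ?I" "P = ?x (i, a)" by simp_all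
    then show "P \<in> ?x ` ?I" by (rule rev_image_eqI)
  next
    fix P assume "P \<in> ?x ` ?I"
    then obtain p where p: "p \<in> ?I" "P = ?x p" by (rule imageE)
    obtain i a where "p = (i, a)" by (cases p)
    with p have "(i, a) \<in> ?I" "P = pt (frame_vec v i a)" by simp_all
    then show "P \<in> {pt (frame_vec v i a) | i a. i \<in> {1..k} \<and> a \<in> {1,2}}" by blast
  qed
  have "inj_on ?x ?I"
  proof (rule inj_onI, clarify)
    fix i a j b assume h: "i \<in> {1..k}" "a \<in> {1::nat, 2}" "j \<in> {1..k}" "b \<in> {1::nat, 2}"
      "pt (frame_vec v i a) = pt (frame_vec v j b)"
    then have "frame_vec v i a = frame_vec v j b"
      using normal_pt_eq_iff frame_vec_normal[OF v] by blast
    then show "i = j \<and> a = b" using frame_vec_inj[OF k v] h by blast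
  qed
  then show ?thesis unfolding image by (simp add: card_image card_cartesian_product)
qed

lemma centric_config_of_frame:
  assumes k: "3 \<le> k" and v: "frame k v"
  shows "centric_config f H0 k (frame_points k v)"
proof -
  define x where "x i a = pt (frame_vec v i a)" for i a
  have points: "frame_points k v = {x i a | i a. i \<in> {1..k} \<and> a \<in> {1,2}}"
    unfolding frame_points_eq x_def ..
  note card = card_frame_points[OF k v]
  have adj: "Xhat_adj f H0 (x i a) (x j b) \<longleftrightarrow> i \<noteq> j \<and> a \<noteq> b"
    if ij: "i \<in> {1..k}" "j \<in> {1..k}" and ab: "a \<in> {1,2}" "b \<in> {1,2}" for i j a b
  proof -
    have "Xhat_adj f H0 (x i a) (x j b)
        \<longleftrightarrow> frame_vec v i a \<noteq> frame_vec v j b \<and> B (frame_vec v i a) (frame_vec v j b) = 0"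
      unfolding x_def using normal_adj_iff frame_vec_normal[OF v] ij by blast
    also have "\<dots> \<longleftrightarrow> i \<noteq> j \<and> a \<noteq> b"
      using frame_vec_B[OF v ij ab] frame_vec_inj[OF k v ij ab] by (auto split: if_splits)
    finally show ?thesis .
  qed
  have perp: "perp f H0 \<subseteq> join (x i 1) (x i 2)" for i
  proof
    fix y assume "y \<in> perp f H0"
    then obtain c where "y = c *s n0" unfolding perp_H0 pt_mem by blast
    then have "y = c *s v i + c *s (v i + n0)" by (simp add: vector_add_ldistrib)
    then show "y \<in> join (x i 1) (x i 2)" unfolding x_def frame_vec_def join_mem by auto
  qed
  have sub: "frame_points k v \<subseteq> Xhat_points f H0"
    unfolding points x_def using normal_pt_Xhat frame_vec_normal[OF v] by blast
  show ?thesis unfolding centric_config_def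
  proof (intro exI[of _ x] conjI ballI)
    show "Xhat_adj f H0 (x i a) (x j b) \<longleftrightarrow> i \<noteq> j \<and> a \<noteq> b"
      if "i \<in> {1..k}" "j \<in> {1..k}" "a \<in> {1,2}" "b \<in> {1,2}" for i j a b
      using adj that by blast
  qed (use points card sub perp in auto)
qed

lemma partner_point:
  assumes v: "normal v" "x1 = pt v" and P: "P \<in> Xhat_points f H0"
    and line: "perp f H0 \<subseteq> join x1 P"
  shows "P = pt (v + n0)"
proof -
  obtain w where w: "normal w" "P = pt w" using Xhat_normal_rep[OF P] by auto
  have "n0 \<in> perp f H0" using pt_n0_subset_perp pt_self by blast
  then have "n0 \<in> join (pt v) (pt w)" using line v(2) w(2) by auto
  then have "w = v + n0" using normal_partner v(1) w(1) by blast
  then show ?thesis using w(2) by simp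
qed

text \<open>Conversely every centric configuration comes from a frame: by the adjacency \<open>x\<^sub>i\<^sup>1 \<sim> x\<^sub>j\<^sup>2\<close>
  the normalised representatives \<open>v i\<close> of \<open>x\<^sub>i\<^sup>1\<close> satisfy \<open>B (v i) (v j + n0) = 0\<close>.\<close>
lemma frame_of_centric_config:
  assumes cfg: "centric_config f H0 k S"
  obtains v where "frame k v" "S = frame_points k v"
proof -
  obtain x :: "nat \<Rightarrow> nat \<Rightarrow> ('a ^ 6) set" where
    S: "S = {x i a | i a. i \<in> {1..k} \<and> a \<in> {1,2}}" and "card S = 2 * k"
    and sub: "S \<subseteq> Xhat_points f H0"
    and adj: "\<And>i j a b. i \<in> {1..k} \<Longrightarrow> j \<in> {1..k} \<Longrightarrow> a \<in> {1,2} \<Longrightarrow> b \<in> {1,2} \<Longrightarrow>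
           Xhat_adj f H0 (x i a) (x j b) \<longleftrightarrow> i \<noteq> j \<and> a \<noteq> b"
    and line: "\<And>i. i \<in> {1..k} \<Longrightarrow> perp f H0 \<subseteq> join (x i 1) (x i 2)"
    using cfg by (elim centric_configE) blast
  have X: "x i a \<in> Xhat_points f H0" if "i \<in> {1..k}" "a \<in> {1,2}" for i a
    using that sub unfolding S by blast
  have "\<forall>i\<in>{1..k}. \<exists>w. normal w \<and> x i 1 = pt w"
  proof
    fix i assume i: "i \<in> {1..k}"
    obtain w where "normal w" "x i 1 = pt w" using Xhat_normal_rep[OF X[OF i]] by auto
    then show "\<exists>w. normal w \<and> x i 1 = pt w" by blast
  qed
  then obtain v where v_all: "\<forall>i\<in>{1..k}. normal (v i) \<and> x i 1 = pt (v i)"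
    by (rule bchoice[THEN exE])
  then have v: "normal (v i)" "x i 1 = pt (v i)" if "i \<in> {1..k}" for i
    using that by blast+
  have x2: "x i 2 = pt (v i + n0)" if i: "i \<in> {1..k}" for i
    using partner_point[OF v[OF i] X[OF i] line[OF i]] by simp
  have "frame k v" unfolding frame_def
  proof (intro conjI ballI impI)
    show "normal (v i)" if "i \<in> {1..k}" for i using v that by blast
    fix i j assume ij: "i \<in> {1..k}" "j \<in> {1..k}" "i \<noteq> j"
    have "Xhat_adj f H0 (x i 1) (x j 2)" using adj[OF ij(1,2)] ij(3) by simp
    then have "Xhat_adj f H0 (pt (v i)) (pt (v j + n0))" using v(2)[OF ij(1)] x2[OF ij(2)] by simp
    then have "B (v i) (v j + n0) = 0"
      using normal_adj_iff[OF v(1)[OF ij(1)] normal_add_n0[OF v(1)[OF ij(2)]]] by blast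
    then show "B (v i) (v j) = 1"
      using v(1)[OF ij(1)] add_eq_0_iff_eq unfolding normal_def by (simp add: B_add_right)
  qed
  moreover have "S = frame_points k v"
  proof (intro equalityI subsetI)
    fix P assume "P \<in> S"
    then obtain i a where i: "i \<in> {1..k}" "a \<in> {1::nat, 2}" "P = x i a" unfolding S by blast
    then have "P = pt (v i) \<or> P = pt (v i + n0)" using v(2)[OF i(1)] x2[OF i(1)] by auto
    then show "P \<in> frame_points k v" using i(1) unfolding frame_points_def pair_def by blast
  next
    fix P assume "P \<in> frame_points k v"
    then obtain i where i: "i \<in> {1..k}" "P = pt (v i) \<or> P = pt (v i + n0)"
      unfolding frame_points_def pair_def by blast
    then have "P = x i 1 \<or> P = x i 2" using v(2)[OF i(1)] x2[OF i(1)] by auto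
    then show "P \<in> S" using i(1) unfolding S by blast
  qed
  ultimately show thesis by (rule that)
qed

end

context centric_geometry
begin

lemma frame_extend:
  assumes v: "frame k v" and y: "y \<in> extensions k v"
  shows "frame (Suc k) (v(Suc k := y))"
  unfolding frame_def
proof (intro conjI ballI impI)
  fix i assume i: "i \<in> {1..Suc k}"
  show "normal ((v(Suc k := y)) i)"
  proof (cases "i = Suc k")
    case True then show ?thesis using y unfolding extensions_def by simp
  next
    case False then have "i \<in> {1..k}" using i by auto
    then show ?thesis using frame_normal[OF v] False by simp
  qed
next
  fix i j assume i: "i \<in> {1..Suc k}" and j: "j \<in> {1..Suc k}" and ij: "i \<noteq> j"
  show "B ((v(Suc k := y)) i) ((v(Suc k := y)) j) = 1"
  proof (cases "i = Suc k")
    case True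
    then have "j \<in> {1..k}" using j ij by auto
    then show ?thesis using True ij y unfolding extensions_def by auto
  next
    case i_old: False
    then have i': "i \<in> {1..k}" using i by auto
    show ?thesis
    proof (cases "j = Suc k")
      case True
      then have "B y (v i) = 1" using y i' unfolding extensions_def by auto
      then show ?thesis using True i_old by (simp add: B_sym)
    next
      case False
      then have "j \<in> {1..k}" using j by auto
      then show ?thesis using frame_B[OF v i'] ij False i_old by simp
    qed
  qed
qed

lemma frame_points_extend: "frame_points (Suc k) (v(Suc k := y)) = frame_points k v \<union> pair y"
proof -
  have "{1..Suc k} = insert (Suc k) {1..k}" by auto
  moreover have "(\<Union>i\<in>{1..k}. pair ((v(Suc k := y)) i)) = (\<Union>i\<in>{1..k}. pair (v i))" by auto
  ultimately show ?thesis unfolding frame_points_def by auto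
qed

lemma frame_restrict:
  assumes v: "frame k v" and "k' \<le> k"
  shows "frame k' v"
proof -
  have sub: "{1..k'} \<subseteq> {1..k}" using \<open>k' \<le> k\<close> by auto
  show ?thesis unfolding frame_def
  proof (intro conjI ballI impI)
    fix i assume "i \<in> {1..k'}" then show "normal (v i)" using frame_normal[OF v] sub by blast
  next
    fix i j assume "i \<in> {1..k'}" "j \<in> {1..k'}" "i \<noteq> j"
    then show "B (v i) (v j) = 1" using frame_B[OF v] sub by blast
  qed
qed

text \<open>The points of an extension are new: neither \<open>y\<close> nor \<open>y + n0\<close> is a frame vector or the
  partner of one, since \<open>B y (v i) = 1\<close> for all \<open>i\<close>.\<close>
lemma extension_pair_disjoint:
  assumes k: "3 \<le> k" and v: "frame k v" and y: "y \<in> extensions k v"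
  shows "pair y \<inter> frame_points k v = {}"
proof -
  have ny: "normal y" and By: "\<And>i. i \<in> {1..k} \<Longrightarrow> B y (v i) = 1"
    using y unfolding extensions_def by auto
  have not_rep: "y \<noteq> v i \<and> y \<noteq> v i + n0" if i: "i \<in> {1..k}" for i
  proof
    show "y \<noteq> v i" using By[OF i] by auto
    obtain l where l: "l \<in> {1..k}" "l \<noteq> i" using third_index[OF k i i] by metis
    have "B (v i + n0) (v l) = 0" using frame_B[OF v i l(1)] l(2) frame_B_n0[OF v l(1)]
      by (simp add: B_add_left)
    then show "y \<noteq> v i + n0" using By[OF l(1)] by auto
  qed
  have "pt z \<notin> frame_points k v" if "z = y \<or> z = y + n0" for z
  proof
    assume "pt z \<in> frame_points k v"
    moreover have "normal z" using that ny normal_add_n0 by blast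
    ultimately obtain i where i: "i \<in> {1..k}" and zi: "z = v i \<or> z = v i + n0"
      using frame_point_rep[OF v] by blast
    have "y = z \<or> y = z + n0" using that by (auto simp: add.assoc)
    then have "y = v i \<or> y = v i + n0" using zi by (auto simp: add.assoc)
    then show False using not_rep[OF i] by blast
  qed
  then show ?thesis unfolding pair_def by blast
qed

text \<open>Distinct extensions give disjoint pairs: their \<open>B\<close>-values against \<open>v 1\<close> agree, so they
  cannot differ by \<open>n0\<close>.\<close>
lemma extension_pairs_disjoint:
  assumes k: "1 \<le> k" and v: "frame k v" and p: "p \<in> extensions k v" "p' \<in> extensions k v"
    and "p \<noteq> p'"
  shows "pair p \<inter> pair p' = {}"
proof -
  have one: "(1::nat) \<in> {1..k}" using k by simp
  have np: "normal p" "normal p'" and "B p (v 1) = 1" "B p' (v 1) = 1"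
    using p one unfolding extensions_def by auto
  then have "p \<noteq> p' + n0" "p' \<noteq> p + n0"
    using frame_B_n0[OF v one] by (auto simp: B_add_left)
  then show ?thesis
    using \<open>p \<noteq> p'\<close> normal_pt_eq_iff np normal_add_n0 unfolding pair_def by auto
qed

end

context centric_geometry
begin

lemma frame_vector_offset:
  assumes v: "frame k v" and u: "frame m u" and sub: "frame_points k v \<subseteq> frame_points m u"
    and i: "i \<in> {1..k}"
  obtains s e where "s \<in> {1..m}" "e \<in> {0, 1}" "v i = u s + e *s n0"
proof -
  have "pt (v i) \<in> frame_points m u" using sub pair_subset_frame_points[OF i] unfolding pair_def by blast
  then obtain s where "s \<in> {1..m}" "v i = u s \<or> v i = u s + n0"
    using frame_point_rep[OF u frame_normal[OF v i]] by blast
  then show thesis using that[of s 0] that[of s 1] by auto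
qed

lemma B_offset:
  "B (x + e *s n0) (y + e' *s n0) = B x y + e' * B x n0 + e * B n0 y"
  by (simp add: B_add_left B_add_right B_smult_left B_smult_right)

text \<open>Distinct vectors of a frame \<open>v\<close> inside a frame \<open>u\<close> carry the same offset \<open>e\<close>: with equal
  base vectors they would be partners, which a third vector of \<open>v\<close> rules out.\<close>
lemma frame_offsets_agree:
  assumes k: "3 \<le> k" and v: "frame k v" and u: "frame m u"
    and il: "i \<in> {1..k}" "l \<in> {1..k}" "i \<noteq> l" and s: "s \<in> {1..m}" "s' \<in> {1..m}"
    and e: "e \<in> {0, 1}" "e' \<in> {0, 1}" and rep: "v i = u s + e *s n0" "v l = u s' + e' *s n0"
  shows "e = e'"
proof (cases "s = s'")
  case True
  have "B (v i) (v l) = e' + e"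
    unfolding rep B_offset using True frame_B_n0[OF u s(1)] by simp
  then have "e' = e + 1" using frame_B[OF v il] add_swap by (metis add.commute)
  then have partner: "v l = v i + n0" using rep True e by (auto simp: add.assoc)
  obtain r where r: "r \<in> {1..k}" "r \<noteq> i" "r \<noteq> l" using third_index[OF k il(1,2)] .
  have "B (v r) (v l) = B (v r) (v i) + B (v r) n0" unfolding partner by (simp add: B_add_right)
  then have "B (v r) (v l) = 0" using frame_B[OF v r(1) il(1)] frame_B_n0[OF v r(1)] r by simp
  then show ?thesis using frame_B[OF v r(1) il(2)] r by simp
next
  case False
  have "B (v i) (v l) = 1 + e' + e"
    unfolding rep B_offset using False frame_B[OF u s] frame_B_n0[OF u s(1)] frame_B_n0[OF u s(2)]
    by simp
  then have "e' + e = 0" using frame_B[OF v il] by (simp add: add.assoc)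
  then show ?thesis using add_eq_0_iff_eq by metis
qed

lemma extension_through_point:
  assumes k: "3 \<le> k" and v: "frame k v" and u: "frame m u"
    and sub: "frame_points k v \<subseteq> frame_points m u"
    and P: "P \<in> frame_points m u" "P \<notin> frame_points k v"
  obtains y where "y \<in> extensions k v" "P \<in> pair y"
proof -
  from P(1) obtain j where j: "j \<in> {1..m}" "P \<in> pair (u j)" unfolding frame_points_def by blast
  have one: "(1::nat) \<in> {1..k}" using k by simp
  obtain s1 e1 where s1: "s1 \<in> {1..m}" "e1 \<in> {0, 1}" "v 1 = u s1 + e1 *s n0"
    using frame_vector_offset[OF v u sub one] .
  have rep: "e = e1 \<and> s \<noteq> j"
    if i: "i \<in> {1..k}" and s: "s \<in> {1..m}" "e \<in> {0, 1}" "v i = u s + e *s n0" for i s e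
  proof
    obtain l where l: "l \<in> {1..k}" "l \<noteq> i" "l \<noteq> 1" using third_index[OF k i one] .
    obtain sl el where sl: "sl \<in> {1..m}" "el \<in> {0, 1}" "v l = u sl + el *s n0"
      using frame_vector_offset[OF v u sub l(1)] .
    show "e = e1"
      using frame_offsets_agree[OF k v u i l(1) l(2)[symmetric] s(1) sl(1) s(2) sl(2) s(3) sl(3)]
        frame_offsets_agree[OF k v u one l(1) l(3)[symmetric] s1(1) sl(1) s1(2) sl(2) s1(3) sl(3)]
      by simp
    have "pair (v i) = pair (u s)" using s(2,3) pair_add_n0 by auto
    then show "s \<noteq> j" using j(2) P(2) pair_subset_frame_points[OF i] by blast
  qed
  define y where "y = u j + e1 *s n0"
  have Py: "P \<in> pair y" using j(2) s1(2) pair_add_n0 unfolding y_def by auto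
  have "y \<in> extensions k v" unfolding extensions_def
  proof (intro CollectI conjI ballI)
    show "normal y" using s1(2) frame_normal[OF u j(1)] normal_add_n0 unfolding y_def by auto
    fix i assume i: "i \<in> {1..k}"
    obtain s e where s: "s \<in> {1..m}" "e \<in> {0, 1}" "v i = u s + e *s n0"
      using frame_vector_offset[OF v u sub i] .
    have "e = e1" "s \<noteq> j" using rep[OF i s] by auto
    then show "B y (v i) = 1"
      unfolding y_def s(3) B_offset using frame_B[OF u j(1) s(1)] frame_B_n0[OF u j(1)]
        frame_B_n0[OF u s(1)] by (simp add: add.assoc)
  qed
  then show thesis using Py by (rule that)
qed

end

context centric_geometry
begin

lemma card_pair: "normal y \<Longrightarrow> card (pair y) = 2"
proof -
  assume y: "normal y"
  have "n0 \<noteq> 0" using f_n0 by auto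
  then have "y \<noteq> y + n0" by (metis add_cancel_right_right)
  then have "pt y \<noteq> pt (y + n0)" using normal_pt_eq_iff y normal_add_n0 by blast
  then show ?thesis unfolding pair_def by simp
qed

lemma configs_over_frame:
  assumes k: "3 \<le> k" and v: "frame k v" and ext: "extensions k v = {p, p'}"
    and cfg: "centric_config f H0 m D" and sub: "frame_points k v \<subseteq> D"
  shows "D \<in> {frame_points k v, frame_points k v \<union> pair p, frame_points k v \<union> pair p',
               frame_points k v \<union> pair p \<union> pair p'}"
proof -
  let ?C = "frame_points k v"
  obtain u where u: "frame m u" "D = frame_points m u" using frame_of_centric_config[OF cfg] .
  have new_point: "\<exists>y\<in>{p, p'}. P \<in> pair y \<and> pair y \<subseteq> D" if P: "P \<in> D" "P \<notin> ?C" for P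
  proof -
    obtain y where y: "y \<in> extensions k v" "P \<in> pair y"
      using extension_through_point[OF k v u(1)] sub P unfolding u(2) by blast
    have "normal y" using y(1) unfolding extensions_def by blast
    then have "pair y \<subseteq> D" using pair_subset_frame_points_if_meets[OF u(1)] y(2) P(1) u(2) by blast
    then show ?thesis using y ext by blast
  qed
  let ?A = "if pair p \<subseteq> D then pair p else {}" and ?A' = "if pair p' \<subseteq> D then pair p' else {}"
  have "D = ?C \<union> ?A \<union> ?A'"
  proof
    show "D \<subseteq> ?C \<union> ?A \<union> ?A'" using new_point by fastforce
    show "?C \<union> ?A \<union> ?A' \<subseteq> D" using sub by auto
  qed
  then show ?thesis by (auto split: if_splits)
qed

lemma card_frame_points_pairs:
  assumes k: "3 \<le> k" and v: "frame k v" and p: "p \<in> extensions k v" "p' \<in> extensions k v"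
    and "p \<noteq> p'"
  shows "card (frame_points k v \<union> pair p) = 2 * k + 2"
    and "card (frame_points k v \<union> pair p \<union> pair p') = 2 * k + 4"
proof -
  have fin: "finite (frame_points k v)" "finite (pair y)" for y
    unfolding frame_points_def pair_def by simp_all
  have np: "normal p" "normal p'" using p unfolding extensions_def by auto
  have dC: "pair p \<inter> frame_points k v = {}" "pair p' \<inter> frame_points k v = {}"
    using extension_pair_disjoint[OF k v] p by auto
  have dp: "pair p \<inter> pair p' = {}"
    using extension_pairs_disjoint[OF _ v p \<open>p \<noteq> p'\<close>] k by simp
  show one: "card (frame_points k v \<union> pair p) = 2 * k + 2"
    using card_Un_disjoint[OF fin(1) fin(2)[of p]] dC(1) card_frame_points[OF k v] card_pair[OF np(1)]
    by (simp add: Int_commute)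
  have "(frame_points k v \<union> pair p) \<inter> pair p' = {}" using dC(2) dp by blast
  then show "card (frame_points k v \<union> pair p \<union> pair p') = 2 * k + 4"
    using card_Un_disjoint[of "frame_points k v \<union> pair p" "pair p'"] fin one card_pair[OF np(2)]
    by simp
qed

lemma centric_config_add_pairs:
  assumes k: "3 \<le> k" and v: "frame k v" and p: "p \<in> extensions k v" "p' \<in> extensions k v"
    and pp': "B p p' = 1"
  shows "centric_config f H0 (Suc k) (frame_points k v \<union> pair p)"
    and "centric_config f H0 (Suc (Suc k)) (frame_points k v \<union> pair p \<union> pair p')"
proof -
  have v': "frame (Suc k) (v(Suc k := p))" by (rule frame_extend[OF v p(1)])
  show "centric_config f H0 (Suc k) (frame_points k v \<union> pair p)"
    using centric_config_of_frame[of "Suc k", OF _ v'] k frame_points_extend by simp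
  have "p' \<in> extensions (Suc k) (v(Suc k := p))"
    using p(2) pp' B_sym[of p p'] unfolding extensions_def by auto
  then have "frame (Suc (Suc k)) ((v(Suc k := p))(Suc (Suc k) := p'))" by (rule frame_extend[OF v'])
  then have "centric_config f H0 (Suc (Suc k))
      (frame_points (Suc (Suc k)) ((v(Suc k := p))(Suc (Suc k) := p')))"
    using k by (intro centric_config_of_frame) simp_all
  then show "centric_config f H0 (Suc (Suc k)) (frame_points k v \<union> pair p \<union> pair p')"
    using frame_points_extend[of "Suc k" "v(Suc k := p)" p'] frame_points_extend[of k v p] by simp
qed

lemma centric_config_card: "centric_config f H0 m D \<Longrightarrow> card D = 2 * m"
  unfolding centric_config_def by (elim exE conjE)

context
  fixes k v p p'
  assumes k: "3 \<le> k" and v: "frame k v" and ext: "extensions k v = {p, p'}"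
    and p_ne: "p \<noteq> p'" and pp': "B p p' = 1"
begin

lemma extension_facts: "p \<in> extensions k v" "p' \<in> extensions k v" "B p' p = 1"
  using ext pp' B_sym by auto

lemma over_frame_cards:
  "card (frame_points k v) = 2 * k" "card (frame_points k v \<union> pair p) = 2 * k + 2"
  "card (frame_points k v \<union> pair p') = 2 * k + 2"
  "card (frame_points k v \<union> pair p \<union> pair p') = 2 * k + 4"
  using card_frame_points[OF k v] card_frame_points_pairs[OF k v extension_facts(1,2) p_ne]
    card_frame_points_pairs[OF k v extension_facts(2,1)] p_ne by auto

lemma configs_over_frame_next:
  "{D. centric_config f H0 (Suc k) D \<and> frame_points k v \<subseteq> D}
     = {frame_points k v \<union> pair p, frame_points k v \<union> pair p'}"
  (is "_ = {?C \<union> pair p, ?C \<union> pair p'}")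
proof (intro equalityI subsetI)
  fix D assume D: "D \<in> {D. centric_config f H0 (Suc k) D \<and> ?C \<subseteq> D}"
  then have card: "card D = 2 * k + 2" using centric_config_card by fastforce
  from D consider "D = ?C" | "D = ?C \<union> pair p" | "D = ?C \<union> pair p'" | "D = ?C \<union> pair p \<union> pair p'"
    using configs_over_frame[OF k v ext] by blast
  then show "D \<in> {?C \<union> pair p, ?C \<union> pair p'}"
    by cases (use card over_frame_cards in simp_all)
next
  fix D assume "D \<in> {?C \<union> pair p, ?C \<union> pair p'}"
  moreover have "centric_config f H0 (Suc k) (?C \<union> pair p)" "centric_config f H0 (Suc k) (?C \<union> pair p')"
    using centric_config_add_pairs(1)[OF k v extension_facts(1,2) pp']
      centric_config_add_pairs(1)[OF k v extension_facts(2,1,3)] .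
  ultimately show "D \<in> {D. centric_config f H0 (Suc k) D \<and> ?C \<subseteq> D}" by blast
qed

lemma card_configs_over_frame_next:
  "card {D. centric_config f H0 (Suc k) D \<and> frame_points k v \<subseteq> D} = 2"
proof -
  have "pt p \<in> pair p" unfolding pair_def by simp
  moreover have "pair p \<inter> frame_points k v = {}"
    by (rule extension_pair_disjoint[OF k v extension_facts(1)])
  moreover have "pair p \<inter> pair p' = {}"
    using extension_pairs_disjoint[OF _ v extension_facts(1,2) p_ne] k by simp
  ultimately have "frame_points k v \<union> pair p \<noteq> frame_points k v \<union> pair p'" by blast
  then show ?thesis unfolding configs_over_frame_next by simp
qed

lemma configs_over_frame_second:
  "{E. centric_config f H0 (Suc (Suc k)) E \<and> frame_points k v \<subseteq> E}
     = {frame_points k v \<union> pair p \<union> pair p'}"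
  (is "_ = {?E}")
proof (intro equalityI subsetI)
  let ?C = "frame_points k v"
  fix E assume E: "E \<in> {E. centric_config f H0 (Suc (Suc k)) E \<and> ?C \<subseteq> E}"
  then have card: "card E = 2 * k + 4" using centric_config_card by fastforce
  from E consider "E = ?C" | "E = ?C \<union> pair p" | "E = ?C \<union> pair p'" | "E = ?E"
    using configs_over_frame[OF k v ext] by blast
  then show "E \<in> {?E}" by cases (use card over_frame_cards in simp_all)
next
  fix E assume "E \<in> {?E}"
  then show "E \<in> {E. centric_config f H0 (Suc (Suc k)) E \<and> frame_points k v \<subseteq> E}"
    using centric_config_add_pairs(2)[OF k v extension_facts(1,2) pp'] by blast
qed

end

end

section \<open>A 4-frame has exactly two extensions\<close>

text \<open>Five vectors never span \<open>V(6, q)\<close>: there are only \<open>q^5 < q^6\<close> linear combinations.\<close>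
lemma five_vectors_not_spanning:
  fixes x1 x2 x3 x4 x5 :: "'a::{field,finite} ^ 6"
  shows "\<exists>x. \<forall>a b c d e. x \<noteq> a *s x1 + b *s x2 + c *s x3 + d *s x4 + e *s x5"
proof (rule ccontr)
  assume spanning: "\<not> ?thesis"
  define g where "g = (\<lambda>(a::'a, b::'a, c::'a, d::'a, e::'a). a *s x1 + b *s x2 + c *s x3 + d *s x4 + e *s x5)"
  have "UNIV \<subseteq> range g"
  proof
    fix x :: "'a ^ 6"
    obtain a b c d e where "x = a *s x1 + b *s x2 + c *s x3 + d *s x4 + e *s x5"
      using spanning by blast
    then have "x = g (a, b, c, d, e)" unfolding g_def by simp
    then show "x \<in> range g" by blast
  qed
  then have "CARD('a ^ 6) \<le> card (range g)" by (intro card_mono) simp_all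
  also have "\<dots> \<le> CARD('a \<times> 'a \<times> 'a \<times> 'a \<times> 'a)" by (rule card_image_le) simp
  finally have "CARD('a) ^ 6 \<le> CARD('a) ^ 5" by (simp add: eval_nat_numeral)
  moreover have "CARD('a) \<ge> 2"
    using card_mono[of "UNIV :: 'a set" "{0, 1}"] by simp
  then have "CARD('a) ^ 5 < CARD('a) ^ 6" by (intro power_strict_increasing) auto
  ultimately show False by simp
qed

text \<open>The space \<open>W\<close> of vectors orthogonal to \<open>n0, v1, v2, v3\<close> contains \<open>z\<close>, is
  anisotropic, and is spanned by \<open>z\<close> and a vector \<open>w\<close> with \<open>B z w = 1\<close>.  The extensions of \<open>v\<close>
  are exactly the vectors \<open>u + b z + w\<close> with \<open>b^2 + b = 1 + f w\<close>; since \<open>f w\<close> is not of the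
  form \<open>a^2 + a\<close>, this equation has exactly two roots.\<close>

locale four_frame = centric_geometry f H0 n0 for f :: "'a::{field,finite} ^ 6 \<Rightarrow> 'a" and H0 n0 +
  fixes v :: "nat \<Rightarrow> 'a ^ 6"
  assumes no_ts_plane: "\<not> ts_subspace_dim f 3"
    and no_as_one: "\<And>a::'a. a ^ 2 + a \<noteq> 1"
    and frame4: "frame 4 v"
begin

definition "v1 = v 1"
definition "v2 = v 2"
definition "v3 = v 3"
definition "v4 = v 4"

lemma v_normal: "normal v1" "normal v2" "normal v3" "normal v4"
  unfolding v1_def v2_def v3_def v4_def by (rule frame_normal[OF frame4], simp)+

lemma v_B_pairwise: "B v1 v2 = 1" "B v1 v3 = 1" "B v1 v4 = 1" "B v2 v3 = 1" "B v2 v4 = 1" "B v3 v4 = 1"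
  unfolding v1_def v2_def v3_def v4_def by (rule frame_B[OF frame4], simp, simp, simp)+

lemma v_B: "f v1 = 0" "f v2 = 0" "f v3 = 0" "f v4 = 0"
  "B v1 n0 = 1" "B v2 n0 = 1" "B v3 n0 = 1" "B v4 n0 = 1"
  "B n0 v1 = 1" "B n0 v2 = 1" "B n0 v3 = 1" "B n0 v4 = 1"
  "B v2 v1 = 1" "B v3 v1 = 1" "B v4 v1 = 1" "B v3 v2 = 1" "B v4 v2 = 1" "B v4 v3 = 1"
  using v_normal normal_B_n0 v_B_pairwise B_sym unfolding normal_def by metis+

lemmas frame_simps = v_B v_B_pairwise f_n0 form_simps

definition "u = n0 + v1 + v2 + v3"
definition "z = v4 + u"
definition "c12 = n0 + v1 + v2"

definition orth :: "'a ^ 6 \<Rightarrow> bool" where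
  "orth x \<longleftrightarrow> B x n0 = 0 \<and> B x v1 = 0 \<and> B x v2 = 0 \<and> B x v3 = 0"

lemma orth_B: "orth x \<Longrightarrow> B x n0 = 0 \<and> B x v1 = 0 \<and> B x v2 = 0 \<and> B x v3 = 0 \<and>
   B n0 x = 0 \<and> B v1 x = 0 \<and> B v2 x = 0 \<and> B v3 x = 0 \<and> B x u = 0 \<and> B u x = 0 \<and> B x c12 = 0"
  unfolding orth_def u_def c12_def by (simp add: B_add_right B_add_left B_sym[of _ x])

lemma orth_add: "orth x \<Longrightarrow> orth y \<Longrightarrow> orth (x + y)"
  unfolding orth_def by (simp add: B_add_left)

lemma orth_smult: "orth x \<Longrightarrow> orth (c *s x)"
  unfolding orth_def by (simp add: B_smult_left)

lemma u_B: "f u = 1" "B u n0 = 1" "B u v1 = 1" "B u v2 = 1" "B u v3 = 1" "B u v4 = 0"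
  "B n0 u = 1" "B v1 u = 1" "B v2 u = 1" "B v3 u = 1" "B v4 u = 0"
  unfolding u_def by (simp_all add: frame_simps)

lemma z_B: "orth z" "f z = 1" "B z u = 0" "B u z = 0" "B z v4 = 0"
  unfolding orth_def z_def by (simp_all add: frame_simps u_B)

lemma c12_B: "f c12 = 0" "B v1 c12 = 0" "B c12 v2 = 0" "B c12 v3 = 1"
  unfolding c12_def by (simp_all add: frame_simps)

text \<open>\<open>v1\<close> and \<open>c12\<close> span a totally singular line; by the Witt index it is maximal.\<close>
lemma ts_line_maximal:
  assumes ft: "f t = 0" and t: "B t v1 = 0" "B t c12 = 0"
  shows "\<exists>\<alpha> \<beta>. t = \<alpha> *s v1 + \<beta> *s c12"
proof (rule ccontr)
  assume not_span: "\<not> ?thesis"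
  define U where "U i = (if i = (0::nat) then v1 else if i = 1 then c12 else t)" for i
  have sum3: "(\<Sum>i<3. c i *s U i) = c 0 *s v1 + c (Suc 0) *s c12 + c (Suc (Suc 0)) *s t" for c
    by (simp add: numeral_3_eq_3 U_def)
  have "ts_subspace_dim f 3"
    unfolding ts_subspace_dim_def
  proof (intro exI[of _ U] conjI allI impI)
    fix c i assume "(\<Sum>i<3. c i *s U i) = 0" and i: "(i::nat) < 3"
    then have e: "c 0 *s v1 + c (Suc 0) *s c12 + c (Suc (Suc 0)) *s t = 0" using sum3 by simp
    have c2: "c (Suc (Suc 0)) = 0"
    proof (rule ccontr)
      assume c2: "c (Suc (Suc 0)) \<noteq> 0"
      have "c (Suc (Suc 0)) *s t = c 0 *s v1 + c (Suc 0) *s c12"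
        using e by (simp add: vec_add_eq_0_iff_eq add.commute)
      then have "(1 / c (Suc (Suc 0))) *s (c (Suc (Suc 0)) *s t)
          = (1 / c (Suc (Suc 0))) *s (c 0 *s v1 + c (Suc 0) *s c12)" by simp
      then have "t = (c 0 / c (Suc (Suc 0))) *s v1 + (c (Suc 0) / c (Suc (Suc 0))) *s c12"
        using c2 by (simp add: vector_smult_assoc vector_add_ldistrib)
      then show False using not_span by blast
    qed
    then have e2: "c 0 *s v1 + c (Suc 0) *s c12 = 0" using e by simp
    have "c 0 = 0" using arg_cong[OF e2, of "\<lambda>x. B x v2"] by (simp add: frame_simps c12_B)
    moreover have "c (Suc 0) = 0"
      using arg_cong[OF e2, of "\<lambda>x. B x v3"] \<open>c 0 = 0\<close> by (simp add: frame_simps c12_B)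
    moreover have "i = 0 \<or> i = Suc 0 \<or> i = Suc (Suc 0)" using i by auto
    ultimately show "c i = 0" using c2 by auto
  next
    fix c
    have "B v1 t = 0" "B c12 t = 0" using t by (simp_all add: B_sym[of _ t])
    then show "f (\<Sum>i<3. c i *s U i) = 0"
      unfolding sum3 by (simp add: frame_simps c12_B ft t)
  qed
  then show False using no_ts_plane by blast
qed

text \<open>Hence \<open>W\<close> is anisotropic: a singular vector of \<open>W\<close> would lie on the line \<open>v1 c12\<close>, and no
  nonzero vector of that line is orthogonal to \<open>v2\<close> and \<open>v3\<close>.\<close>
lemma orth_anisotropic:
  assumes "orth t" "f t = 0"
  shows "t = 0"
proof -
  obtain \<alpha> \<beta> where t: "t = \<alpha> *s v1 + \<beta> *s c12"
    using ts_line_maximal assms orth_B by blast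
  have "\<alpha> = 0" using orth_B[OF assms(1)] unfolding t by (simp add: frame_simps c12_B)
  moreover have "\<beta> = 0" using orth_B[OF assms(1)] \<open>\<alpha> = 0\<close> unfolding t by (simp add: frame_simps c12_B)
  ultimately show ?thesis using t by simp
qed

end

context four_frame
begin

definition orth_correction :: "'a ^ 6 \<Rightarrow> 'a ^ 6" where
  "orth_correction x = (B x v1 + B x v2 + B x v3) *s n0 + (B x n0 + B x v2 + B x v3) *s v1
     + (B x n0 + B x v1 + B x v3) *s v2 + (B x n0 + B x v1 + B x v2) *s v3"

lemma orth_correction: "orth (x + orth_correction x)"
  unfolding orth_def orth_correction_def by (simp add: frame_simps algebra_simps)

text \<open>\<open>z\<close> is not in the radical of \<open>B\<close> restricted to \<open>W\<close>.  Otherwise pick \<open>y \<in> W\<close> outside the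
  line \<open>\<langle>z\<rangle>\<close> (possible as \<open>n0, v1, v2, v3, z\<close> do not span \<open>V\<close>); then \<open>y + r z\<close> with
  \<open>r^2 = f y\<close> would be a nonzero singular vector of \<open>W\<close>.\<close>
lemma exists_partner_of_z: "\<exists>w. orth w \<and> B z w = 1"
proof (rule ccontr)
  assume no_partner: "\<not> ?thesis"
  have z_rad: "B z w = 0" if "orth w" for w
  proof (rule ccontr)
    assume "B z w \<noteq> 0"
    then have "B z ((1 / B z w) *s w) = 1" by (simp add: B_smult_right)
    then show False using no_partner orth_smult[OF that] by blast
  qed
  obtain x where x: "\<forall>a b c d e. x \<noteq> a *s n0 + b *s v1 + c *s v2 + d *s v3 + e *s z"
    using five_vectors_not_spanning by blast
  define y where "y = x + orth_correction x"
  have y: "orth y" unfolding y_def by (rule orth_correction)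
  have y_not_z: "y \<noteq> c *s z" for c
  proof
    assume "y = c *s z"
    then have "x = orth_correction x + c *s z" unfolding y_def by (subst vec_add_swap)
    then show False using x unfolding orth_correction_def by blast
  qed
  obtain r where r: "r ^ 2 = f y" using char2_square_root[OF char2] by blast
  have "B y z = 0" using z_rad[OF y] B_sym by metis
  then have "f (y + r *s z) = 0" using r z_B by (simp add: f_add f_smult B_smult_right)
  moreover have "orth (y + r *s z)" using y z_B(1) by (simp add: orth_add orth_smult)
  ultimately have "y + r *s z = 0" by (rule orth_anisotropic[rotated])
  then show False using y_not_z vec_add_eq_0_iff_eq by blast
qed

definition w :: "'a ^ 6" where
  "w = (SOME w. orth w \<and> B z w = 1)"

lemma w_B: "orth w" "B z w = 1" "B w z = 1" "B w u = 0" "B u w = 0" "B w v4 = 1"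
proof -
  show w: "orth w" "B z w = 1" using someI_ex[OF exists_partner_of_z] unfolding w_def by blast+
  then show "B w z = 1" using B_sym by metis
  show "B w u = 0" "B u w = 0" using orth_B[OF w(1)] by auto
  have "v4 = z + u" unfolding z_def by (simp add: add.assoc)
  then show "B w v4 = 1" using orth_B[OF w(1)] \<open>B w z = 1\<close> by (simp add: B_add_right)
qed

text \<open>\<open>W = \<langle>z, w\<rangle>\<close>: the remainder \<open>x + (B x w) z + (B x z) w\<close> is orthogonal to \<open>z\<close> and \<open>w\<close>; if
  it were nonzero, rescaling it by \<open>c\<close> with \<open>c^2 f r = 1\<close> would make \<open>z + c r\<close> singular.\<close>
lemma orth_decomposition:
  assumes x: "orth x"
  shows "x = B x w *s z + B x z *s w"
proof -
  define r where "r = x + B x w *s z + B x z *s w"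
  have r: "orth r" unfolding r_def by (intro orth_add orth_smult x z_B(1) w_B(1))
  have rz: "B z r = 0" unfolding r_def using w_B z_B by (simp add: form_simps B_sym[of z x])
  have rw: "B r w = 0" unfolding r_def using w_B by (simp add: form_simps)
  have "r = 0"
  proof (rule ccontr)
    assume "r \<noteq> 0"
    then have fr: "f r \<noteq> 0" using orth_anisotropic[OF r] by blast
    obtain c where c: "c ^ 2 = 1 / f r" using char2_square_root[OF char2] by blast
    have "f (z + c *s r) = 0" using c fr rz z_B by (simp add: f_add f_smult B_smult_right)
    moreover have "orth (z + c *s r)" using r z_B(1) by (simp add: orth_add orth_smult)
    ultimately have "z + c *s r = 0" by (rule orth_anisotropic[rotated])
    then have "B (z + c *s r) w = 0" by simp
    then show False using w_B rw by (simp add: B_add_left B_smult_left)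
  qed
  then show ?thesis unfolding r_def by (simp add: vec_add_eq_0_iff_eq add.assoc)
qed

text \<open>\<open>f w\<close> is not of the form \<open>a^2 + a\<close>: otherwise \<open>a z + w\<close> would be singular in \<open>W\<close>.\<close>
lemma f_w_not_as_value: "a ^ 2 + a \<noteq> f w"
proof
  assume h: "a ^ 2 + a = f w"
  have "f (a *s z + w) = (a ^ 2 + a) + f w" using w_B z_B by (simp add: f_add f_smult B_smult_left)
  then have "f (a *s z + w) = 0" using h by simp
  moreover have "orth (a *s z + w)" using z_B(1) w_B(1) by (simp add: orth_add orth_smult)
  ultimately have "a *s z + w = 0" by (rule orth_anisotropic[rotated])
  then have "B (a *s z + w) z = 0" by simp
  then show False using w_B z_B by (simp add: B_add_left B_smult_left)
qed

definition candidate :: "'a \<Rightarrow> 'a ^ 6" where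
  "candidate b = u + b *s z + w"

lemma candidate_B: "B (candidate b) n0 = 1" "B (candidate b) v1 = 1" "B (candidate b) v2 = 1"
    "B (candidate b) v3 = 1" "B (candidate b) v4 = 1"
  unfolding candidate_def using w_B u_B z_B orth_B[OF z_B(1)] orth_B[OF w_B(1)]
  by (simp_all add: B_add_left B_smult_left)

lemma f_candidate: "f (candidate b) = (b ^ 2 + b) + (1 + f w)"
  unfolding candidate_def using w_B u_B z_B
  by (simp add: form_simps algebra_simps)

lemma extensions_four: "y \<in> extensions 4 v \<longleftrightarrow> normal y \<and> B y v1 = 1 \<and> B y v2 = 1 \<and> B y v3 = 1 \<and> B y v4 = 1"
proof -
  have "{1..4::nat} = {1, 2, 3, 4}" by auto
  then show ?thesis unfolding extensions_def v1_def v2_def v3_def v4_def by auto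
qed

text \<open>The extensions of \<open>v\<close> are the candidates \<open>u + b z + w\<close> with \<open>b^2 + b = 1 + f w\<close>:
  for an extension \<open>y\<close> the vector \<open>y + u\<close> lies in \<open>W\<close> and has \<open>B (y + u) z = 1\<close>.\<close>
lemma extensions_eq_candidates:
  "extensions 4 v = candidate ` {b. b ^ 2 + b = 1 + f w}"
proof (intro equalityI subsetI)
  fix y assume "y \<in> extensions 4 v"
  then have y: "f y = 0" "B y n0 = 1" "B y v1 = 1" "B y v2 = 1" "B y v3 = 1" "B y v4 = 1"
    unfolding extensions_four normal_def by auto
  have x: "orth (y + u)" unfolding orth_def using y u_B by (simp add: B_add_left)
  have "B y z = 1" unfolding z_def u_def using y by (simp add: B_add_right)
  then have yuz: "B (y + u) z = 1" using z_B by (simp add: B_add_left)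
  define b where "b = B (y + u) w"
  have "y + u = b *s z + B (y + u) z *s w" unfolding b_def by (rule orth_decomposition[OF x])
  also have "\<dots> = b *s z + w" using yuz by simp
  finally have yu: "y + u = b *s z + w" .
  have "y = (y + u) + u" by (simp add: add.assoc)
  also have "\<dots> = candidate b" unfolding yu candidate_def by (simp add: add.commute add.left_commute)
  finally have y_eq: "y = candidate b" .
  then have "(b ^ 2 + b) + (1 + f w) = 0" using y(1) f_candidate by simp
  then have "b ^ 2 + b = 1 + f w" by (simp add: add_eq_0_iff_eq)
  then show "y \<in> candidate ` {b. b ^ 2 + b = 1 + f w}" using y_eq by blast
next
  fix y assume "y \<in> candidate ` {b. b ^ 2 + b = 1 + f w}"
  then obtain b where b: "b ^ 2 + b = 1 + f w" "y = candidate b" by blast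
  then have "f y = 0" using f_candidate by simp
  then show "y \<in> extensions 4 v" unfolding extensions_four normal_def b(2) using candidate_B by simp
qed

text \<open>By the
  Artin--Schreier argument \<open>b^2 + b = 1 + f w\<close> has a root \<open>b\<close>, the other root being \<open>b + 1\<close>.\<close>
theorem two_extensions: "\<exists>p p'. extensions 4 v = {p, p'} \<and> p \<noteq> p' \<and> B p p' = 1"
proof -
  obtain b where b: "b ^ 2 + b = 1 + f w"
    using artin_schreier_value_sum[OF char2] no_as_one f_w_not_as_value by blast
  have "c ^ 2 + c = 1 + f w \<longleftrightarrow> c = b \<or> c = b + 1" for c
    using char2_artin_schreier_eq[OF char2, of b c] b by (simp add: eq_commute)
  then have "{c. c ^ 2 + c = 1 + f w} = {b, b + 1}" by blast
  then have ext: "extensions 4 v = {candidate b, candidate (b + 1)}"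
    unfolding extensions_eq_candidates by simp
  have shift: "candidate (b + 1) = candidate b + z"
    unfolding candidate_def by (simp add: vector_sadd_rdistrib algebra_simps)
  have "z \<noteq> 0" using z_B by auto
  then have "candidate b \<noteq> candidate (b + 1)" unfolding shift by simp
  moreover have "B (candidate b) z = 1"
    unfolding candidate_def using w_B z_B by (simp add: B_add_left B_smult_left)
  then have "B (candidate b) (candidate (b + 1)) = 1" unfolding shift by (simp add: B_add_right)
  ultimately show ?thesis using ext by blast
qed

end

section \<open>Cubes, decades and dodecades\<close>

context centric_geometry
begin

lemma frame4_two_extensions:
  assumes "\<not> ts_subspace_dim f 3" "\<And>a::'a. a ^ 2 + a \<noteq> 1" "frame 4 v"
  obtains p p' where "extensions 4 v = {p, p'}" "p \<noteq> p'" "B p p' = 1"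
proof -
  interpret four_frame f H0 n0 v by unfold_locales (use assms in auto)
  show thesis using two_extensions that by blast
qed

theorem cube_extensions:
  assumes no_plane: "\<not> ts_subspace_dim f 3" and no_root: "\<And>a::'a. a ^ 2 + a \<noteq> 1"
    and C: "centric_config f H0 4 C"
  shows "card {D. centric_config f H0 5 D \<and> C \<subseteq> D} = 2"
    and "card {E. centric_config f H0 6 E \<and> C \<subseteq> E} = 1"
proof -
  obtain v where v: "frame 4 v" "C = frame_points 4 v" using frame_of_centric_config[OF C] .
  obtain p p' where p: "extensions 4 v = {p, p'}" "p \<noteq> p'" "B p p' = 1"
    using frame4_two_extensions[OF no_plane no_root v(1)] .
  show "card {D. centric_config f H0 5 D \<and> C \<subseteq> D} = 2"
    using card_configs_over_frame_next[of 4, OF _ v(1) p] v(2) by (simp add: numeral_eq_Suc)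
  show "card {E. centric_config f H0 6 E \<and> C \<subseteq> E} = 1"
    using configs_over_frame_second[of 4, OF _ v(1) p] v(2) by (simp add: numeral_eq_Suc)
qed

text \<open>A centric decade lies in exactly one centric dodecade: the unique dodecade over the cube
  formed by its first four pairs already contains the fifth pair.\<close>
theorem decade_extension:
  assumes no_plane: "\<not> ts_subspace_dim f 3" and no_root: "\<And>a::'a. a ^ 2 + a \<noteq> 1"
    and D: "centric_config f H0 5 D"
  shows "card {E. centric_config f H0 6 E \<and> D \<subseteq> E} = 1"
proof -
  obtain u where u: "frame 5 u" "D = frame_points 5 u" using frame_of_centric_config[OF D] .
  have u4: "frame 4 u" using frame_restrict[OF u(1)] by simp
  obtain p p' where p: "extensions 4 u = {p, p'}" "p \<noteq> p'" "B p p' = 1"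
    using frame4_two_extensions[OF no_plane no_root u4] .
  let ?C = "frame_points 4 u" and ?E = "frame_points 4 u \<union> pair p \<union> pair p'"
  have over_C: "{E. centric_config f H0 6 E \<and> ?C \<subseteq> E} = {?E}"
    using configs_over_frame_second[of 4, OF _ u4 p] by (simp add: numeral_eq_Suc)
  have "u 5 \<in> extensions 4 u"
    unfolding extensions_def using frame_normal[OF u(1)] frame_B[OF u(1)] by auto
  then have "pair (u 5) \<subseteq> pair p \<union> pair p'" using p(1) by auto
  moreover have "D = ?C \<union> pair (u 5)"
    using frame_points_extend[of 4 u "u 5"] u(2) by (simp add: numeral_eq_Suc)
  ultimately have "{E. centric_config f H0 6 E \<and> D \<subseteq> E} = {?E}"
    using over_C by blast
  then show ?thesis by simp
qed

end

theorem corollary3p12: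
  fixes f :: "'a::{field,finite} ^ 6 \<Rightarrow> 'a"
    and H0 :: "('a ^ 6) set"
    and n :: nat
  assumes "CARD('a) = 2 ^ n"
    and "odd n"
    and "quadratic_form f"
    and "nondeg_on UNIV f"
    and "witt_index f 2"
    and "is_hyperplane H0"
    and "nondeg_on H0 f"
  shows "(\<forall>C. centric_config f H0 4 C \<longrightarrow>
            card {D. centric_config f H0 5 D \<and> C \<subseteq> D} = 2 \<and>
            card {E. centric_config f H0 6 E \<and> C \<subseteq> E} = 1) \<and>
         (\<forall>D. centric_config f H0 5 D \<longrightarrow>
            card {E. centric_config f H0 6 E \<and> D \<subseteq> E} = 1)"
proof -
  have "n \<ge> 1" using \<open>odd n\<close> by (cases n) auto
  then have char2: "(1::'a) + 1 = 0" using char2_of_card_pow2 \<open>CARD('a) = 2 ^ n\<close> by blast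
  interpret char2_quadratic_form f using char2 \<open>quadratic_form f\<close> by unfold_locales
  have no_plane: "\<not> ts_subspace_dim f 3"
    using \<open>witt_index f 2\<close> unfolding witt_index_def by (simp add: numeral_eq_Suc)
  have no_root: "(a::'a) ^ 2 + a \<noteq> 1" for a
    using odd_pow2_field_no_cube_root \<open>CARD('a) = 2 ^ n\<close> \<open>odd n\<close> by blast
  have geometry: "\<exists>n0. centric_geometry f H0 n0" if "centric_config f H0 k S" "2 \<le> k" for k S
    using centric_config_pole[OF \<open>is_hyperplane H0\<close> \<open>nondeg_on H0 f\<close> that]
    by (metis centric_geometry_axioms.intro centric_geometry_def)
  have cube: "card {D. centric_config f H0 5 D \<and> C \<subseteq> D} = 2 \<and>
      card {E. centric_config f H0 6 E \<and> C \<subseteq> E} = 1" if C: "centric_config f H0 4 C" for C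
  proof -
    obtain n0 where "centric_geometry f H0 n0" using geometry[OF C] by auto
    then interpret centric_geometry f H0 n0 .
    show ?thesis using cube_extensions[OF no_plane no_root C] by blast
  qed
  have decade: "card {E. centric_config f H0 6 E \<and> D \<subseteq> E} = 1" if D: "centric_config f H0 5 D" for D
  proof -
    obtain n0 where "centric_geometry f H0 n0" using geometry[OF D] by auto
    then interpret centric_geometry f H0 n0 .
    show ?thesis using decade_extension[OF no_plane no_root D] .
  qed
  show ?thesis using cube decade by blast
qed
end
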